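(* Let $C>0$ be any fixed constant and let $p=p(n)\in[0,1]$ be a sequence of probability values. For $\Gamma\in G(n,p)$ the following hold asymptotically almost surely: (1) If $pn^2\to 0$, then $\Gamma$ has no adjacent domination pairs. (2) If $p<\frac{\log(n)+\log(\log(n))-\omega(n)}{n}$ for some sequence $\omega(n)\to+\infty$, then $\Gamma$ has at least $C$ non-adjacent domination pairs. (3) If $p<\frac{\log(n)+\log(\log(n))-\omega(n)}{n}$ for some sequence $\omega(n)\to+\infty$ and in addition $pn^2\to\infty$, then $\Gamma$ also has at least $C$ adjacent domination pairs. (4) If $\frac{\log(n)+\log(\log(n))+\omega_1(n)}{n}<p<1-\frac{\log(n)+\log(\log(n))+\omega_2(n)}{n}$ for some sequences $\omega_1(n),\omega_2(n)\to+\infty$, then $\Gamma$ has no domination pairs. (5) If $p>1-\frac{\log(n)+\log(\log(n))-\omega(n)}{n}$ for some sequence $\omega(n)\to+\infty$, then $\Gamma$ has at least $C$ adjacent domination pairs. (6) If $p>1-\frac{\log(n)+\log(\log(n))-\omega(n)}{n}$ for some sequence $\omega(n)\to+\infty$ and in addition $(1-p)n^2\to\infty$, then $\Gamma$ also has at least $C$ non-adjacent domination pairs. (7) If $(1-p)n^2\to 0$, then $\Gamma$ has no non-adjacent domination pairs.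
   Context: All graphs are finite simplicial graphs. $G(n,p)$ is the Erdős–Rényi model: the probability space of all simplicial graphs on a fixed vertex set $V$ with $|V|=n$, where each of the $\binom n2$ possible edges is present independently with probability $p=p(n)$. A property holds asymptotically almost surely (a.a.s.) if its probability tends to $1$ as $n\to\infty$. $\log$ is the natural logarithm. For a vertex $a$, $\mathrm{st}(a)$ is the set consisting of $a$ and all vertices adjacent to $a$. For distinct vertices $a,b$, $a$ dominates $b$ (written $a>b$; $(a,b)$ is a domination pair) if every vertex adjacent to $b$ is adjacent to or equal to $a$, i.e. $\mathrm{st}(b)\setminus\{b\}\subset\mathrm{st}(a)$. A domination pair $(a,b)$ is adjacent if $a$ is adjacent to $b$, and non-adjacent otherwise. *)

theory Defs
  imports "HOL-Probability.Probability"
begin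

text \<open>Vertex set of G(n,p) is {0..<n}; the potential edges are the pairs (i,j) with i<j<n.\<close>
definition pot_edges :: "nat \<Rightarrow> (nat \<times> nat) set" where
  "pot_edges n = {(i, j). i < j \<and> j < n}"

text \<open>A graph is given by its edge indicator on potential edges (False outside).
  G(n,p): each potential edge present independently with probability p.\<close>
definition Gnp :: "nat \<Rightarrow> real \<Rightarrow> (nat \<times> nat \<Rightarrow> bool) pmf" where
  "Gnp n p = Pi_pmf (pot_edges n) False (\<lambda>_. bernoulli_pmf p)"

definition adj :: "(nat \<times> nat \<Rightarrow> bool) \<Rightarrow> nat \<Rightarrow> nat \<Rightarrow> bool" where
  "adj G a b \<longleftrightarrow> a \<noteq> b \<and> G (min a b, max a b)"

definition dominates :: "nat \<Rightarrow> (nat \<times> nat \<Rightarrow> bool) \<Rightarrow> nat \<Rightarrow> nat \<Rightarrow> bool" where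
  "dominates n G a b \<longleftrightarrow> a < n \<and> b < n \<and> a \<noteq> b \<and>
     (\<forall>v<n. adj G v b \<longrightarrow> adj G v a \<or> v = a)"

definition dom_pairs :: "nat \<Rightarrow> (nat \<times> nat \<Rightarrow> bool) \<Rightarrow> (nat \<times> nat) set" where
  "dom_pairs n G = {(a, b). dominates n G a b}"

definition adj_dom_pairs :: "nat \<Rightarrow> (nat \<times> nat \<Rightarrow> bool) \<Rightarrow> (nat \<times> nat) set" where
  "adj_dom_pairs n G = {(a, b). dominates n G a b \<and> adj G a b}"

definition nonadj_dom_pairs :: "nat \<Rightarrow> (nat \<times> nat \<Rightarrow> bool) \<Rightarrow> (nat \<times> nat) set" where
  "nonadj_dom_pairs n G = {(a, b). dominates n G a b \<and> \<not> adj G a b}"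

definition aas :: "(nat \<Rightarrow> real) \<Rightarrow> (nat \<Rightarrow> (nat \<times> nat \<Rightarrow> bool) \<Rightarrow> bool) \<Rightarrow> bool" where
  "aas p Q \<longleftrightarrow> (\<lambda>n. measure_pmf.prob (Gnp n (p n)) {G. Q n G}) \<longlonglongrightarrow> 1"

end

theory Submission
  imports Defs "HOL-Real_Asymp.Real_Asymp"
begin

text \<open>Below the threshold \<open>n p = ln n + ln (ln n)\<close> the graph a.a.s. has many isolated vertices,
  each dominated by every other vertex, or many leaves, each dominated by its neighbour and, when
  no component is a single edge, also by a neighbour of that neighbour; the counts are concentrated
  by Chebyshev's inequality.  Above the threshold a union bound excludes vertices of degree at most
  one, and a vertex \<open>b\<close> of degree at least two whose neighbourhood lies in that of \<open>a\<close> shares one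
  or two neighbours with \<open>a\<close> while every other vertex \<open>w\<close> independently satisfies
  \<open>w \<in> N(b) \<Longrightarrow> w \<in> N(a)\<close>, which has probability \<open>p\<^sup>2 + 1 - p\<close>.  An adjacent domination pair
  needs an edge, of which there are about \<open>p n\<^sup>2\<close>.  Complementation exchanges \<open>G(n,p)\<close> with
  \<open>G(n,1-p)\<close> and adjacent with non-adjacent domination pairs, which gives the statements for \<open>p\<close>
  close to \<open>1\<close>.\<close>

definition edge :: "nat \<Rightarrow> nat \<Rightarrow> nat \<times> nat" where
  "edge a b = (min a b, max a b)"

lemma edge_commute: "edge a b = edge b a"
  by (auto simp: edge_def)

lemma edge_in_pot_edges: "a < n \<Longrightarrow> b < n \<Longrightarrow> a \<noteq> b \<Longrightarrow> edge a b \<in> pot_edges n"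
  by (auto simp: edge_def pot_edges_def min_def max_def)

lemma edge_eq_edgeD: "edge a b = edge c d \<Longrightarrow> (a = c \<and> b = d) \<or> (a = d \<and> b = c)"
  unfolding edge_def by (cases "a \<le> b"; cases "c \<le> d") (auto simp: min_def max_def)

lemma adj_iff_edge: "adj G a b \<longleftrightarrow> a \<noteq> b \<and> G (edge a b)"
  by (simp add: adj_def edge_def)

lemma adj_commute: "adj G a b \<longleftrightarrow> adj G b a"
  by (auto simp: adj_iff_edge edge_commute)

lemma finite_pot_edges: "finite (pot_edges n)"
  by (rule finite_subset[of _ "{..<n} \<times> {..<n}"]) (auto simp: pot_edges_def)

lemma card_pot_edges_le: "real (card (pot_edges n)) \<le> real n ^ 2"
proof -
  have "card (pot_edges n) \<le> card ({..<n} \<times> {..<n})"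
    by (rule card_mono) (auto simp: pot_edges_def)
  then show ?thesis unfolding power2_eq_square of_nat_mult[symmetric] of_nat_le_iff by simp
qed

definition edges_at :: "nat \<Rightarrow> nat set \<Rightarrow> (nat \<times> nat) set" where
  "edges_at b W = edge b ` W"

lemma finite_edges_at: "finite W \<Longrightarrow> finite (edges_at b W)"
  unfolding edges_at_def by simp

lemma card_edges_at: "b \<notin> W \<Longrightarrow> card (edges_at b W) = card W"
  unfolding edges_at_def by (rule card_image) (auto simp: inj_on_def dest: edge_eq_edgeD)

lemma edges_at_subset_pot_edges: "b < n \<Longrightarrow> W \<subseteq> {..<n} \<Longrightarrow> b \<notin> W \<Longrightarrow> edges_at b W \<subseteq> pot_edges n"
  unfolding edges_at_def by (auto intro!: edge_in_pot_edges)

lemma disjoint_edges_at: "b \<noteq> b' \<Longrightarrow> b \<notin> W \<Longrightarrow> b' \<notin> W \<Longrightarrow> edges_at b W \<inter> edges_at b' W' = {}"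
  unfolding edges_at_def by (auto dest: edge_eq_edgeD)

lemma disjoint_edges_at_same: "b \<notin> W \<Longrightarrow> W \<inter> W' = {} \<Longrightarrow> edges_at b W \<inter> edges_at b W' = {}"
  unfolding edges_at_def by (auto dest!: edge_eq_edgeD)

lemma edge_in_edges_at_iff: "b \<notin> W \<Longrightarrow> edge b v \<in> edges_at b W \<longleftrightarrow> v \<in> W"
  unfolding edges_at_def by (auto dest: edge_eq_edgeD)

lemma edge_notin_edges_at: "b' \<noteq> b \<Longrightarrow> b \<notin> W \<Longrightarrow> b' \<notin> W \<Longrightarrow> edge b' v \<notin> edges_at b W"
  unfolding edges_at_def by (auto dest!: edge_eq_edgeD)

lemma card_lessThan_minus_list:
  "set xs \<subseteq> {..<n} \<Longrightarrow> distinct xs \<Longrightarrow> card ({..<n} - set xs) = n - length xs"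
  by (simp add: card_Diff_subset distinct_card)

lemma card_lessThan_minus_list_ge: "n - length xs \<le> card ({..<n} - set xs)"
  using card_length[of xs] diff_card_le_card_Diff[of "set xs" "{..<n}"] by simp

lemma measure_pmf_prob_mono: "A \<subseteq> B \<Longrightarrow> measure_pmf.prob M A \<le> measure_pmf.prob M B"
  by (rule measure_pmf.finite_measure_mono) auto

lemma measure_pmf_prob_Un_le: "measure_pmf.prob M (A \<union> B) \<le> measure_pmf.prob M A + measure_pmf.prob M B"
  by (rule measure_subadditive) (auto simp: measure_pmf.emeasure_eq_measure)

lemma measure_pmf_prob_UN_le:
  "finite I \<Longrightarrow> measure_pmf.prob M (\<Union>i\<in>I. A i) \<le> (\<Sum>i\<in>I. measure_pmf.prob M (A i))"
  by (rule measure_pmf.finite_measure_subadditive_finite) auto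

lemma measure_pmf_prob_UN_le_card:
  assumes "finite I" "\<And>i. i \<in> I \<Longrightarrow> measure_pmf.prob M (A i) \<le> q"
  shows "measure_pmf.prob M (\<Union>i\<in>I. A i) \<le> real (card I) * q"
proof -
  have "measure_pmf.prob M (\<Union>i\<in>I. A i) \<le> (\<Sum>i\<in>I. measure_pmf.prob M (A i))"
    by (rule measure_pmf_prob_UN_le[OF assms(1)])
  also have "\<dots> \<le> (\<Sum>i\<in>I. q)" by (rule sum_mono[OF assms(2)])
  finally show ?thesis by simp
qed

lemma measure_pmf_prob_ge_if_compl_subset:
  assumes "{x. \<not> P x} \<subseteq> B"
  shows "1 - measure_pmf.prob M B \<le> measure_pmf.prob M {x. P x}"
proof -
  have "measure_pmf.prob M {x. P x} = measure_pmf.prob M (space (measure_pmf M) - {x. \<not> P x})"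
    by (rule arg_cong[where f="measure_pmf.prob M"]) auto
  also have "\<dots> = 1 - measure_pmf.prob M {x. \<not> P x}"
    by (rule measure_pmf.prob_compl) auto
  finally show ?thesis using measure_pmf_prob_mono[OF assms, of M] by simp
qed

lemma expectation_sum_indicator_sq_le:
  fixes M :: "'a pmf" and A :: "'i \<Rightarrow> 'a set"
  assumes fin: "finite I"
    and beta: "\<And>i j. i \<in> I \<Longrightarrow> j \<in> I \<Longrightarrow> i \<noteq> j \<Longrightarrow> measure_pmf.prob M (A i \<inter> A j) \<le> \<beta>"
  shows "measure_pmf.expectation M (\<lambda>x. (\<Sum>i\<in>I. indicator (A i) x :: real)\<^sup>2)
    \<le> (\<Sum>i\<in>I. measure_pmf.prob M (A i)) + real (card I) * (real (card I) - 1) * \<beta>"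
proof -
  have int_ind: "integrable (measure_pmf M) (indicator B :: 'a \<Rightarrow> real)" for B
    by (rule measure_pmf.integrable_const_bound[where B=1]) (auto simp: indicator_def)
  have "(\<Sum>i\<in>I. indicator (A i) x :: real)\<^sup>2 = (\<Sum>i\<in>I. \<Sum>j\<in>I. indicator (A i \<inter> A j) x)" for x
    unfolding power2_eq_square sum_product by (intro sum.cong refl) (auto simp: indicator_def)
  then have "measure_pmf.expectation M (\<lambda>x. (\<Sum>i\<in>I. indicator (A i) x :: real)\<^sup>2)
      = (\<Sum>i\<in>I. \<Sum>j\<in>I. measure_pmf.prob M (A i \<inter> A j))"
    using int_ind by (simp add: Bochner_Integration.integral_sum)
  also have "\<dots> \<le> (\<Sum>i\<in>I. measure_pmf.prob M (A i) + (real (card I) - 1) * \<beta>)"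
  proof (rule sum_mono)
    fix i assume i: "i \<in> I"
    have "(\<Sum>j\<in>I. measure_pmf.prob M (A i \<inter> A j))
        = measure_pmf.prob M (A i) + (\<Sum>j\<in>I-{i}. measure_pmf.prob M (A i \<inter> A j))"
      using fin i by (simp add: sum.remove)
    also have "(\<Sum>j\<in>I-{i}. measure_pmf.prob M (A i \<inter> A j)) \<le> (\<Sum>j\<in>I-{i}. \<beta>)"
      using i by (intro sum_mono beta) auto
    also have "(\<Sum>j\<in>I-{i}. \<beta>) = (real (card I) - 1) * \<beta>"
    proof -
      have "1 \<le> card I" using fin i by (auto simp: Suc_le_eq card_gt_0_iff)
      then show ?thesis using fin i by (simp add: card_Diff_singleton of_nat_diff)
    qed
    finally show "(\<Sum>j\<in>I. measure_pmf.prob M (A i \<inter> A j)) \<le> measure_pmf.prob M (A i) + (real (card I) - 1) * \<beta>"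
      by simp
  qed
  also have "\<dots> = (\<Sum>i\<in>I. measure_pmf.prob M (A i)) + real (card I) * (real (card I) - 1) * \<beta>"
    by (simp add: sum.distrib)
  finally show ?thesis .
qed

lemma prob_count_less_le:
  fixes M :: "'a pmf" and A :: "'i \<Rightarrow> 'a set"
  assumes fin: "finite I"
    and mu: "\<mu> = (\<Sum>i\<in>I. measure_pmf.prob M (A i))"
    and beta: "\<And>i j. i \<in> I \<Longrightarrow> j \<in> I \<Longrightarrow> i \<noteq> j \<Longrightarrow> measure_pmf.prob M (A i \<inter> A j) \<le> \<beta>"
    and c: "c < \<mu>"
  shows "measure_pmf.prob M {x. real (card {i\<in>I. x \<in> A i}) < c}
     \<le> (\<mu> + real (card I) * (real (card I) - 1) * \<beta> - \<mu>\<^sup>2) / (\<mu> - c)\<^sup>2"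
proof -
  define f where "f x = (\<Sum>i\<in>I. indicator (A i) x :: real)" for x
  have f_card: "f x = real (card {i\<in>I. x \<in> A i})" for x
    unfolding f_def using fin by (simp add: indicator_def sum.If_cases Int_def conj_commute)
  have int_ind: "integrable (measure_pmf M) (indicator B :: 'a \<Rightarrow> real)" for B
    by (rule measure_pmf.integrable_const_bound[where B=1]) (auto simp: indicator_def)
  have int_f: "integrable (measure_pmf M) f" unfolding f_def using int_ind by auto
  have E_f: "measure_pmf.expectation M f = \<mu>"
    unfolding f_def mu using int_ind by (subst Bochner_Integration.integral_sum) auto
  have int_f_sq: "integrable (measure_pmf M) (\<lambda>x. (f x)\<^sup>2)"
    unfolding f_def power2_eq_square sum_product using int_ind by (auto simp flip: indicator_inter_arith)
  have E_f_sq: "measure_pmf.expectation M (\<lambda>x. (f x)\<^sup>2) \<le> \<mu> + real (card I) * (real (card I) - 1) * \<beta>"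
    unfolding f_def mu by (rule expectation_sum_indicator_sq_le[OF fin beta])
  have sq_expand: "(\<lambda>x. (f x - \<mu>)\<^sup>2) = (\<lambda>x. (f x)\<^sup>2 - 2 * \<mu> * f x + \<mu>\<^sup>2)"
    by (auto simp: power2_eq_square algebra_simps)
  have var: "measure_pmf.expectation M (\<lambda>x. (f x - \<mu>)\<^sup>2) = measure_pmf.expectation M (\<lambda>x. (f x)\<^sup>2) - \<mu>\<^sup>2"
    unfolding sq_expand using int_f int_f_sq E_f by (simp add: power2_eq_square)
  have int_var: "integrable (measure_pmf M) (\<lambda>x. (f x - \<mu>)\<^sup>2)"
    unfolding sq_expand using int_f int_f_sq by simp
  have pos: "0 < (\<mu> - c)\<^sup>2" using c by simp
  have "{x. real (card {i\<in>I. x \<in> A i}) < c} \<subseteq> {x \<in> space (measure_pmf M). (\<mu> - c)\<^sup>2 \<le> (f x - \<mu>)\<^sup>2}"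
  proof safe
    fix x assume "real (card {i\<in>I. x \<in> A i}) < c"
    then have "\<mu> - c \<le> \<bar>f x - \<mu>\<bar>" using c by (simp add: f_card)
    then show "(\<mu> - c)\<^sup>2 \<le> (f x - \<mu>)\<^sup>2" using c
      by (metis abs_le_square_iff abs_of_nonneg diff_ge_0_iff_ge less_le)
  qed simp
  then have "measure_pmf.prob M {x. real (card {i\<in>I. x \<in> A i}) < c} \<le>
        measure_pmf.prob M {x \<in> space (measure_pmf M). (\<mu> - c)\<^sup>2 \<le> (f x - \<mu>)\<^sup>2}"
    by (rule measure_pmf_prob_mono)
  also have "\<dots> \<le> measure_pmf.expectation M (\<lambda>x. (f x - \<mu>)\<^sup>2) / (\<mu> - c)\<^sup>2"
    by (rule integral_Markov_inequality_measure[OF int_var _ _ pos]) auto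
  also have "\<dots> \<le> (\<mu> + real (card I) * (real (card I) - 1) * \<beta> - \<mu>\<^sup>2) / (\<mu> - c)\<^sup>2"
    using E_f_sq pos unfolding var by (intro divide_right_mono) auto
  finally show ?thesis .
qed

lemma prob_count_less_le_half_mean:
  fixes M :: "'a pmf" and A :: "'i \<Rightarrow> 'a set"
  assumes "finite I"
    and "\<mu> = (\<Sum>i\<in>I. measure_pmf.prob M (A i))"
    and "\<And>i j. i \<in> I \<Longrightarrow> j \<in> I \<Longrightarrow> i \<noteq> j \<Longrightarrow> measure_pmf.prob M (A i \<inter> A j) \<le> \<beta>"
    and c: "0 < c" "2 * c \<le> \<mu>"
  shows "measure_pmf.prob M {x. real (card {i\<in>I. x \<in> A i}) < c}
     \<le> 4 * (\<mu> + real (card I) * (real (card I) - 1) * \<beta> - \<mu>\<^sup>2) / \<mu>\<^sup>2"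
proof -
  define num where "num = \<mu> + real (card I) * (real (card I) - 1) * \<beta> - \<mu>\<^sup>2"
  have cheb: "measure_pmf.prob M {x. real (card {i\<in>I. x \<in> A i}) < c} \<le> num / (\<mu> - c)\<^sup>2"
    unfolding num_def using assms by (intro prob_count_less_le) auto
  have pos: "0 < (\<mu> - c)\<^sup>2" using c by simp
  have "0 \<le> num"
    using cheb measure_nonneg[of M] pos by (meson order_trans zero_le_divide_iff not_le)
  have "(\<mu> / 2)\<^sup>2 \<le> (\<mu> - c)\<^sup>2" using c by (intro power_mono) auto
  then have "\<mu>\<^sup>2 \<le> 4 * (\<mu> - c)\<^sup>2" by (simp add: power_divide)
  then have "num * \<mu>\<^sup>2 \<le> num * (4 * (\<mu> - c)\<^sup>2)"
    using \<open>0 \<le> num\<close> by (rule mult_left_mono)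
  then have "num / (\<mu> - c)\<^sup>2 \<le> 4 * num / \<mu>\<^sup>2"
    using c pos by (simp add: divide_simps mult.commute mult.left_commute)
  then show ?thesis using cheb unfolding num_def by linarith
qed

lemma prob_Gnp_edges:
  assumes S: "S \<subseteq> pot_edges n" and T: "T \<subseteq> pot_edges n" and ST: "S \<inter> T = {}"
    and p: "0 \<le> p" "p \<le> 1"
  shows "measure_pmf.prob (Gnp n p) {G. (\<forall>e\<in>S. G e) \<and> (\<forall>e\<in>T. \<not> G e)} = p ^ card S * (1 - p) ^ card T"
proof -
  define B where "B e = (if e \<in> S then {True} else if e \<in> T then {False} else UNIV)" for e
  define f where "f e = (if e \<in> S then p else if e \<in> T then 1 - p else 1)" for e
  have "{G. (\<forall>e\<in>S. G e) \<and> (\<forall>e\<in>T. \<not> G e)} = Pi (pot_edges n) B"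
  proof (intro set_eqI iffI)
    fix G assume G: "G \<in> Pi (pot_edges n) B"
    have "G e" if "e \<in> S" for e using Pi_mem[OF G, of e] S that by (auto simp: B_def)
    moreover have "\<not> G e" if "e \<in> T" for e
      using Pi_mem[OF G, of e] T ST that unfolding B_def by (cases "e \<in> S") auto
    ultimately show "G \<in> {G. (\<forall>e\<in>S. G e) \<and> (\<forall>e\<in>T. \<not> G e)}" by auto
  qed (auto simp: B_def)
  then have "measure_pmf.prob (Gnp n p) {G. (\<forall>e\<in>S. G e) \<and> (\<forall>e\<in>T. \<not> G e)}
      = (\<Prod>e\<in>pot_edges n. measure_pmf.prob (bernoulli_pmf p) (B e))"
    unfolding Gnp_def using finite_pot_edges by (simp add: measure_Pi_pmf_Pi)
  also have "\<dots> = prod f (pot_edges n)"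
    by (intro prod.cong refl) (use p in \<open>auto simp: B_def f_def measure_pmf_single\<close>)
  also have "\<dots> = prod f (pot_edges n - (S \<union> T)) * (prod f S * prod f T)"
  proof -
    have fin: "finite S" "finite T" using S T finite_pot_edges finite_subset by blast+
    have "prod f (pot_edges n) = prod f (pot_edges n - (S \<union> T)) * prod f (S \<union> T)"
      using S T finite_pot_edges by (intro prod.subset_diff) auto
    then show ?thesis using fin ST by (simp add: prod.union_disjoint)
  qed
  also have "prod f (pot_edges n - (S \<union> T)) = 1"
    by (intro prod.neutral) (auto simp: f_def)
  also have "prod f S = p ^ card S" by (simp add: f_def)
  also have "prod f T = (1 - p) ^ card T"
  proof -
    have "prod f T = prod (\<lambda>_. 1 - p) T" using ST by (intro prod.cong) (auto simp: f_def)
    then show ?thesis by simp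
  qed
  finally show ?thesis by simp
qed

lemma prob_Gnp_edges_le:
  assumes "X \<subseteq> {G. (\<forall>e\<in>S. G e) \<and> (\<forall>e\<in>T. \<not> G e)}"
    and "S \<subseteq> pot_edges n" "T \<subseteq> pot_edges n" "S \<inter> T = {}" "0 \<le> p" "p \<le> 1"
  shows "measure_pmf.prob (Gnp n p) X \<le> p ^ card S * (1 - p) ^ card T"
  using measure_pmf_prob_mono[OF assms(1), of "Gnp n p"] prob_Gnp_edges[OF assms(2-6)] by simp

section \<open>Complementation\<close>

definition compl_graph :: "nat \<Rightarrow> (nat \<times> nat \<Rightarrow> bool) \<Rightarrow> (nat \<times> nat \<Rightarrow> bool)" where
  "compl_graph n G = (\<lambda>e. e \<in> pot_edges n \<and> \<not> G e)"

lemma bernoulli_pmf_one_minus: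
  "0 \<le> p \<Longrightarrow> p \<le> 1 \<Longrightarrow> bernoulli_pmf (1 - p) = map_pmf Not (bernoulli_pmf p)"
proof (intro pmf_eqI)
  fix i :: bool
  assume "0 \<le> p" "p \<le> 1"
  have "{x. \<not> x} = {False}" "{x. x} = {True}" by auto
  then show "pmf (bernoulli_pmf (1 - p)) i = pmf (map_pmf Not (bernoulli_pmf p)) i"
    using \<open>0 \<le> p\<close> \<open>p \<le> 1\<close> by (cases i) (simp_all add: pmf_map vimage_def measure_pmf_single)
qed

lemma Gnp_one_minus:
  assumes "0 \<le> p" "p \<le> 1"
  shows "Gnp n (1 - p) = map_pmf (compl_graph n) (Gnp n p)"
proof -
  have "Gnp n (1 - p) = Pi_pmf (pot_edges n) False (\<lambda>_. map_pmf Not (bernoulli_pmf p))"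
    unfolding Gnp_def using assms by (simp add: bernoulli_pmf_one_minus)
  also have "\<dots> = map_pmf (\<lambda>f x. if x \<in> pot_edges n then f x else False)
                   (Pi_pmf (pot_edges n) True (\<lambda>_. map_pmf Not (bernoulli_pmf p)))"
    by (rule Pi_pmf_default_swap[symmetric]) (rule finite_pot_edges)
  also have "Pi_pmf (pot_edges n) True (\<lambda>_. map_pmf Not (bernoulli_pmf p)) =
             map_pmf (\<lambda>h. Not \<circ> h) (Pi_pmf (pot_edges n) False (\<lambda>_. bernoulli_pmf p))"
    by (rule Pi_pmf_map) (auto simp: finite_pot_edges)
  finally show ?thesis
    unfolding Gnp_def map_pmf_comp by (auto intro!: map_pmf_cong simp: compl_graph_def fun_eq_iff)
qed

lemma prob_Gnp_compl_graph:
  assumes "0 \<le> p" "p \<le> 1"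
  shows "measure_pmf.prob (Gnp n p) {G. Q G} = measure_pmf.prob (Gnp n (1 - p)) {G. Q (compl_graph n G)}"
proof -
  have "Gnp n p = map_pmf (compl_graph n) (Gnp n (1 - p))"
    using Gnp_one_minus[of "1 - p" n] assms by simp
  then show ?thesis by (simp add: vimage_def)
qed

lemma adj_compl_graph:
  "v < n \<Longrightarrow> x < n \<Longrightarrow> adj (compl_graph n G) v x \<longleftrightarrow> v \<noteq> x \<and> \<not> adj G v x"
  by (auto simp: adj_iff_edge compl_graph_def intro: edge_in_pot_edges)

lemma dominates_compl_graph: "dominates n (compl_graph n G) a b \<longleftrightarrow> dominates n G b a"
proof (cases "a < n \<and> b < n \<and> a \<noteq> b")
  case True
  then have "(\<forall>v<n. adj (compl_graph n G) v b \<longrightarrow> adj (compl_graph n G) v a \<or> v = a) \<longleftrightarrow>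
             (\<forall>v<n. adj G v a \<longrightarrow> adj G v b \<or> v = b)"
    using adj_compl_graph[of _ n b G] adj_compl_graph[of _ n a G] by (auto simp: adj_def)
  then show ?thesis using True by (simp add: dominates_def)
qed (auto simp: dominates_def)

lemma nonadj_dom_pairs_compl_graph:
  "nonadj_dom_pairs n (compl_graph n G) = prod.swap ` adj_dom_pairs n G"
proof -
  have "(a, b) \<in> nonadj_dom_pairs n (compl_graph n G) \<longleftrightarrow> (b, a) \<in> adj_dom_pairs n G" for a b
    using adj_compl_graph[of a n b G] adj_commute[of G a b]
    by (cases "dominates n G b a")
      (auto simp: nonadj_dom_pairs_def adj_dom_pairs_def dominates_compl_graph, auto simp: dominates_def)
  then show ?thesis by (auto simp: image_iff) (metis swap_simp)
qed

lemma adj_dom_pairs_compl_graph: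
  "adj_dom_pairs n (compl_graph n G) = prod.swap ` nonadj_dom_pairs n G"
proof -
  have "(a, b) \<in> adj_dom_pairs n (compl_graph n G) \<longleftrightarrow> (b, a) \<in> nonadj_dom_pairs n G" for a b
    using adj_compl_graph[of a n b G] adj_commute[of G a b]
    by (cases "dominates n G b a")
      (auto simp: nonadj_dom_pairs_def adj_dom_pairs_def dominates_compl_graph, auto simp: dominates_def)
  then show ?thesis by (auto simp: image_iff) (metis swap_simp)
qed

lemma dom_pairs_compl_graph_eq_empty: "dom_pairs n (compl_graph n G) = {} \<longleftrightarrow> dom_pairs n G = {}"
  by (auto simp: dom_pairs_def dominates_compl_graph)

lemma aas_one_minus:
  assumes "\<And>n. 0 \<le> p n \<and> p n \<le> 1" "\<And>n G. Q n (compl_graph n G) \<longleftrightarrow> R n G"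
    and "aas (\<lambda>n. 1 - p n) R"
  shows "aas p Q"
proof -
  have "measure_pmf.prob (Gnp n (p n)) {G. Q n G} = measure_pmf.prob (Gnp n (1 - p n)) {G. R n G}" for n
    using prob_Gnp_compl_graph[of "p n" n "Q n"] assms(1)[of n] assms(2) by simp
  then show ?thesis using assms(3) by (simp add: aas_def)
qed

section \<open>Vertices of small degree and witnesses of domination\<close>

definition isolated :: "nat \<Rightarrow> (nat \<times> nat \<Rightarrow> bool) \<Rightarrow> nat \<Rightarrow> bool" where
  "isolated n G b \<longleftrightarrow> (\<forall>w<n. w \<noteq> b \<longrightarrow> \<not> G (edge b w))"

definition leaf :: "nat \<Rightarrow> (nat \<times> nat \<Rightarrow> bool) \<Rightarrow> nat \<Rightarrow> bool" where
  "leaf n G b \<longleftrightarrow> (\<exists>v<n. v \<noteq> b \<and> G (edge b v) \<and> (\<forall>w<n. w \<noteq> b \<and> w \<noteq> v \<longrightarrow> \<not> G (edge b w)))"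

definition isolated_edge :: "nat \<Rightarrow> (nat \<times> nat \<Rightarrow> bool) \<Rightarrow> bool" where
  "isolated_edge n G \<longleftrightarrow> (\<exists>b<n. \<exists>v<n. b \<noteq> v \<and> G (edge b v) \<and>
     (\<forall>w<n. w \<noteq> b \<and> w \<noteq> v \<longrightarrow> \<not> G (edge b w) \<and> \<not> G (edge v w)))"

text \<open>If \<open>a\<close> dominates a vertex \<open>b\<close> of degree at least two, then \<open>a\<close>, \<open>b\<close> and one common
  neighbour (if \<open>a\<close> and \<open>b\<close> are adjacent) or two common neighbours (otherwise) form a witness.\<close>

definition dom_witness_adj :: "nat \<Rightarrow> (nat \<times> nat \<Rightarrow> bool) \<Rightarrow> nat \<Rightarrow> nat \<Rightarrow> nat \<Rightarrow> bool" where
  "dom_witness_adj n G a b v \<longleftrightarrow> distinct [a, b, v] \<and> G (edge a b) \<and> G (edge b v) \<and> G (edge a v) \<and>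
     (\<forall>w<n. w \<notin> {a, b, v} \<longrightarrow> G (edge b w) \<longrightarrow> G (edge a w))"

definition dom_witness_nonadj :: "nat \<Rightarrow> (nat \<times> nat \<Rightarrow> bool) \<Rightarrow> nat \<Rightarrow> nat \<Rightarrow> nat \<Rightarrow> nat \<Rightarrow> bool" where
  "dom_witness_nonadj n G a b u v \<longleftrightarrow> distinct [a, b, u, v] \<and>
     G (edge b u) \<and> G (edge b v) \<and> G (edge a u) \<and> G (edge a v) \<and>
     (\<forall>w<n. w \<notin> {a, b, u, v} \<longrightarrow> G (edge b w) \<longrightarrow> G (edge a w))"

lemma finite_nonadj_dom_pairs: "finite (nonadj_dom_pairs n G)"
  by (rule finite_subset[of _ "{..<n} \<times> {..<n}"]) (auto simp: nonadj_dom_pairs_def dominates_def)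

lemma finite_adj_dom_pairs: "finite (adj_dom_pairs n G)"
  by (rule finite_subset[of _ "{..<n} \<times> {..<n}"]) (auto simp: adj_dom_pairs_def dominates_def)

lemma card_le_card_if_ex_pair:
  assumes "finite P" "\<And>b. b \<in> B \<Longrightarrow> \<exists>a. (a, b) \<in> P"
  shows "card B \<le> card P"
proof -
  have "B \<subseteq> snd ` P" using assms(2) by force
  then show ?thesis using assms(1) by (meson card_image_le card_mono finite_imageI order_trans)
qed

lemma dominated_if_isolated:
  "a < n \<Longrightarrow> b < n \<Longrightarrow> a \<noteq> b \<Longrightarrow> isolated n G b \<Longrightarrow> (a, b) \<in> nonadj_dom_pairs n G"
  by (auto simp: isolated_def nonadj_dom_pairs_def dominates_def adj_iff_edge edge_commute)

lemma card_nonadj_dom_pairs_ge_if_isolated: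
  assumes "b < n" "isolated n G b"
  shows "real n - 1 \<le> real (card (nonadj_dom_pairs n G))"
proof -
  have "(\<lambda>a. (a, b)) ` ({..<n} - {b}) \<subseteq> nonadj_dom_pairs n G"
    using assms dominated_if_isolated by auto
  then have "card ((\<lambda>a. (a, b)) ` ({..<n} - {b})) \<le> card (nonadj_dom_pairs n G)"
    by (rule card_mono[OF finite_nonadj_dom_pairs])
  moreover have "card ((\<lambda>a. (a, b)) ` ({..<n} - {b})) = n - 1"
    using assms by (subst card_image) (auto simp: inj_on_def)
  ultimately show ?thesis by linarith
qed

lemma card_leaves_le_card_adj_dom_pairs:
  "card {b. b < n \<and> leaf n G b} \<le> card (adj_dom_pairs n G)"
proof (rule card_le_card_if_ex_pair[OF finite_adj_dom_pairs])
  fix b assume "b \<in> {b. b < n \<and> leaf n G b}"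
  then obtain v where v: "b < n" "v < n" "v \<noteq> b" "G (edge b v)" "\<forall>w<n. w \<noteq> b \<and> w \<noteq> v \<longrightarrow> \<not> G (edge b w)"
    unfolding leaf_def by blast
  then have "(v, b) \<in> adj_dom_pairs n G"
    by (auto simp: adj_dom_pairs_def dominates_def adj_iff_edge edge_commute)
  then show "\<exists>a. (a, b) \<in> adj_dom_pairs n G" ..
qed

lemma card_leaves_le_card_nonadj_dom_pairs:
  assumes "\<not> isolated_edge n G"
  shows "card {b. b < n \<and> leaf n G b} \<le> card (nonadj_dom_pairs n G)"
proof (rule card_le_card_if_ex_pair[OF finite_nonadj_dom_pairs])
  fix b assume "b \<in> {b. b < n \<and> leaf n G b}"
  then obtain v where v: "b < n" "v < n" "v \<noteq> b" "G (edge b v)" "\<forall>w<n. w \<noteq> b \<and> w \<noteq> v \<longrightarrow> \<not> G (edge b w)"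
    unfolding leaf_def by blast
  then obtain w where w: "w < n" "w \<noteq> b" "w \<noteq> v" "G (edge v w)"
    using assms unfolding isolated_edge_def by blast
  have "(w, b) \<in> nonadj_dom_pairs n G"
    using v w by (auto simp: nonadj_dom_pairs_def dominates_def adj_iff_edge edge_commute)
  then show "\<exists>a. (a, b) \<in> nonadj_dom_pairs n G" ..
qed

lemma dom_witness_cases:
  assumes "(a, b) \<in> dom_pairs n G"
  shows "isolated n G b \<or> leaf n G b \<or> (\<exists>v<n. dom_witness_adj n G a b v) \<or>
    (\<exists>u<n. \<exists>v<n. dom_witness_nonadj n G a b u v)"
proof -
  have ab: "a < n" "b < n" "a \<noteq> b" and dom: "\<And>v. v < n \<Longrightarrow> adj G v b \<Longrightarrow> adj G v a \<or> v = a"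
    using assms by (auto simp: dom_pairs_def dominates_def)
  have dom_edge: "G (edge a w)" if "w < n" "w \<noteq> a" "w \<noteq> b" "G (edge b w)" for w
    using dom[of w] that by (auto simp: adj_iff_edge edge_commute)
  show ?thesis
  proof (cases "isolated n G b \<or> leaf n G b")
    case False
    then obtain u1 u2 where u: "u1 < n" "u1 \<noteq> b" "G (edge b u1)" "u2 < n" "u2 \<noteq> b" "u2 \<noteq> u1" "G (edge b u2)"
      unfolding isolated_def leaf_def by blast
    have "(\<exists>v<n. dom_witness_adj n G a b v) \<or> (\<exists>u<n. \<exists>v<n. dom_witness_nonadj n G a b u v)"
    proof (cases "G (edge a b)")
      case True
      obtain v where "v \<in> {u1, u2}" "v \<noteq> a" using u by auto
      then have "dom_witness_adj n G a b v" "v < n"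
        using True u ab dom_edge by (auto simp: dom_witness_adj_def)
      then show ?thesis by blast
    next
      case False
      then have "u1 \<noteq> a" "u2 \<noteq> a" using u by (auto simp: edge_commute)
      then have "dom_witness_nonadj n G a b u1 u2"
        using u ab dom_edge by (auto simp: dom_witness_nonadj_def)
      then show ?thesis using u by blast
    qed
    then show ?thesis by blast
  qed blast
qed

lemma prob_isolated:
  assumes "b < n" "0 \<le> p" "p \<le> 1"
  shows "measure_pmf.prob (Gnp n p) {G. isolated n G b} = (1 - p) ^ (n - 1)"
proof -
  have "{G. isolated n G b} = {G. (\<forall>e\<in>{}. G e) \<and> (\<forall>e\<in>edges_at b ({..<n} - {b}). \<not> G e)}"
    by (auto simp: isolated_def edges_at_def)
  also have "measure_pmf.prob (Gnp n p) \<dots> = (1 - p) ^ card (edges_at b ({..<n} - {b}))"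
    using prob_Gnp_edges[of "{}" n "edges_at b ({..<n} - {b})" p]
      assms edges_at_subset_pot_edges[of b n "{..<n} - {b}"] by auto
  finally show ?thesis
    using assms card_lessThan_minus_list[of "[b]" n] by (simp add: card_edges_at)
qed

lemma prob_leaf:
  assumes "b < n" "0 \<le> p" "p \<le> 1"
  shows "measure_pmf.prob (Gnp n p) {G. leaf n G b} = real (n - 1) * p * (1 - p) ^ (n - 2)"
proof -
  define A where "A v = {G. (\<forall>e\<in>{edge b v}. G e) \<and> (\<forall>e\<in>edges_at b ({..<n} - {b, v}). \<not> G e)}" for v
  have "{G. leaf n G b} = (\<Union>v\<in>{..<n} - {b}. A v)"
    by (auto simp: leaf_def edges_at_def A_def)
  also have "measure_pmf.prob (Gnp n p) \<dots> = (\<Sum>v\<in>{..<n} - {b}. measure_pmf.prob (Gnp n p) (A v))"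
  proof (rule measure_pmf.finite_measure_finite_Union)
    show "disjoint_family_on A ({..<n} - {b})"
      unfolding disjoint_family_on_def A_def
      by (auto simp: edge_in_edges_at_iff)
  qed auto
  also have "\<dots> = (\<Sum>v\<in>{..<n} - {b}. p * (1 - p) ^ (n - 2))"
  proof (rule sum.cong[OF refl])
    fix v assume v: "v \<in> {..<n} - {b}"
    have "measure_pmf.prob (Gnp n p) (A v) = p ^ card {edge b v} * (1 - p) ^ card (edges_at b ({..<n} - {b, v}))"
      unfolding A_def using assms v edges_at_subset_pot_edges[of b n "{..<n} - {b, v}"]
      by (intro prob_Gnp_edges) (auto intro!: edge_in_pot_edges simp: edge_in_edges_at_iff)
    then show "measure_pmf.prob (Gnp n p) (A v) = p * (1 - p) ^ (n - 2)"
      using v assms card_lessThan_minus_list[of "[b, v]" n] by (simp add: card_edges_at numeral_2_eq_2)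
  qed
  finally show ?thesis
    using assms card_lessThan_minus_list[of "[b]" n] by simp
qed

lemma prob_isolated_pair_le:
  assumes "b < n" "b' < n" "b \<noteq> b'" "0 \<le> p" "p \<le> 1"
  shows "measure_pmf.prob (Gnp n p) ({G. isolated n G b} \<inter> {G. isolated n G b'}) \<le> (1 - p) ^ (2 * (n - 2))"
proof -
  define W where "W = {..<n} - {b, b'}"
  define T where "T = edges_at b W \<union> edges_at b' W"
  have sub: "{G. isolated n G b} \<inter> {G. isolated n G b'} \<subseteq> {G. (\<forall>e\<in>{}. G e) \<and> (\<forall>e\<in>T. \<not> G e)}"
    by (auto simp: T_def W_def isolated_def edges_at_def)
  have "T \<subseteq> pot_edges n"
    using assms edges_at_subset_pot_edges[of b n W] edges_at_subset_pot_edges[of b' n W]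
    by (auto simp: T_def W_def)
  then have "measure_pmf.prob (Gnp n p) ({G. isolated n G b} \<inter> {G. isolated n G b'}) \<le> (1 - p) ^ card T"
    using prob_Gnp_edges_le[OF sub empty_subsetI _ Int_empty_left assms(4,5)] by simp
  moreover have "card T = 2 * (n - 2)"
    using assms disjoint_edges_at[of b b' W W] card_lessThan_minus_list[of "[b, b']" n]
    by (simp add: T_def W_def card_Un_disjoint finite_edges_at card_edges_at)
  ultimately show ?thesis by simp
qed

lemma prob_leaf_pair_config_le:
  assumes b: "b < n" "b' < n" "b \<noteq> b'" and v: "v < n" "v \<noteq> b" "v' < n" "v' \<noteq> b'"
    and p: "0 \<le> p" "p \<le> 1"
  shows "measure_pmf.prob (Gnp n p)
     {G. G (edge b v) \<and> G (edge b' v') \<and> (\<forall>w\<in>{..<n} - {b, b', v}. \<not> G (edge b w)) \<and>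
         (\<forall>w\<in>{..<n} - {b, b', v'}. \<not> G (edge b' w))}
   \<le> p ^ card {edge b v, edge b' v'} * (1 - p) ^ (2 * (n - 3))"
proof -
  define W where "W = {..<n} - {b, b', v}"
  define W' where "W' = {..<n} - {b, b', v'}"
  define T where "T = edges_at b W \<union> edges_at b' W'"
  have bW: "b \<notin> W" "b' \<notin> W" "b \<notin> W'" "b' \<notin> W'" by (auto simp: W_def W'_def)
  have "measure_pmf.prob (Gnp n p)
     {G. G (edge b v) \<and> G (edge b' v') \<and> (\<forall>w\<in>W. \<not> G (edge b w)) \<and> (\<forall>w\<in>W'. \<not> G (edge b' w))}
     \<le> p ^ card {edge b v, edge b' v'} * (1 - p) ^ card T"
  proof (rule prob_Gnp_edges_le)
    show "T \<subseteq> pot_edges n"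
      using b edges_at_subset_pot_edges[of b n W] edges_at_subset_pot_edges[of b' n W']
      by (auto simp: T_def W_def W'_def)
    show "{edge b v, edge b' v'} \<inter> T = {}"
      using b bW by (auto simp: T_def edge_in_edges_at_iff edge_notin_edges_at W_def W'_def)
  qed (use b v p in \<open>auto simp: T_def edges_at_def W_def W'_def intro!: edge_in_pot_edges\<close>)
  moreover have "2 * (n - 3) \<le> card T"
  proof -
    have "card T = card W + card W'"
      using b bW disjoint_edges_at[of b b' W W']
      by (simp add: T_def card_Un_disjoint finite_edges_at card_edges_at W_def W'_def)
    then show ?thesis
      using card_lessThan_minus_list_ge[of n "[b, b', v]"] card_lessThan_minus_list_ge[of n "[b, b', v']"]
      by (simp add: W_def W'_def)
  qed
  then have "(1 - p) ^ card T \<le> (1 - p) ^ (2 * (n - 3))"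
    using p by (intro power_decreasing) auto
  ultimately show ?thesis
    using p by (simp add: W_def W'_def) (meson mult_left_mono order_trans zero_le_power)
qed

lemma prob_leaf_pair_le:
  assumes b: "b < n" "b' < n" "b \<noteq> b'" and p: "0 \<le> p" "p \<le> 1"
  shows "measure_pmf.prob (Gnp n p) ({G. leaf n G b} \<inter> {G. leaf n G b'})
     \<le> (p + real (n - 1) ^ 2 * p ^ 2) * (1 - p) ^ (2 * (n - 3))"
proof -
  define Q where "Q = (1 - p) ^ (2 * (n - 3))"
  define A where "A vv = {G. G (edge b (fst vv)) \<and> G (edge b' (snd vv)) \<and>
      (\<forall>w\<in>{..<n} - {b, b', fst vv}. \<not> G (edge b w)) \<and> (\<forall>w\<in>{..<n} - {b, b', snd vv}. \<not> G (edge b' w))}" for vv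
  define I where "I = ({..<n} - {b}) \<times> ({..<n} - {b'})"
  have "{G. leaf n G b} \<inter> {G. leaf n G b'} \<subseteq> A (b', b) \<union> (\<Union>vv\<in>I. A vv)"
    unfolding leaf_def A_def I_def by force
  then have "measure_pmf.prob (Gnp n p) ({G. leaf n G b} \<inter> {G. leaf n G b'})
      \<le> measure_pmf.prob (Gnp n p) (A (b', b)) + measure_pmf.prob (Gnp n p) (\<Union>vv\<in>I - {(b', b)}. A vv)"
    by (smt (verit) measure_pmf_prob_mono measure_pmf_prob_Un_le Un_insert_right insert_Diff_single
        UN_insert Un_absorb)
  also have "measure_pmf.prob (Gnp n p) (A (b', b)) \<le> p * Q"
    using prob_leaf_pair_config_le[of b n b' b' b p] b p by (simp add: A_def Q_def edge_commute)
  also have "measure_pmf.prob (Gnp n p) (\<Union>vv\<in>I - {(b', b)}. A vv) \<le> real (card (I - {(b', b)})) * (p ^ 2 * Q)"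
  proof (rule measure_pmf_prob_UN_le_card)
    fix vv assume vv: "vv \<in> I - {(b', b)}"
    then have "edge b (fst vv) \<noteq> edge b' (snd vv)" using b by (auto dest!: edge_eq_edgeD)
    then show "measure_pmf.prob (Gnp n p) (A vv) \<le> p ^ 2 * Q"
      using prob_leaf_pair_config_le[of b n b' "fst vv" "snd vv" p] vv b p
      by (auto simp: A_def I_def Q_def numeral_2_eq_2)
  qed (simp add: I_def)
  also have "real (card (I - {(b', b)})) \<le> real (n - 1) ^ 2"
  proof -
    have "card (I - {(b', b)}) \<le> (n - 1) * (n - 1)"
      using b card_lessThan_minus_list[of "[b]" n] card_lessThan_minus_list[of "[b']" n]
        card_Diff1_le[of I "(b', b)"]
      by (simp add: I_def card_cartesian_product)
    then show ?thesis by (metis of_nat_le_iff of_nat_mult power2_eq_square)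
  qed
  finally show ?thesis
    using p by (simp add: Q_def algebra_simps mult_right_mono)
qed

lemma prob_isolated_edge_at:
  assumes bv: "b < n" "v < n" "b \<noteq> v" and p: "0 \<le> p" "p \<le> 1"
  shows "measure_pmf.prob (Gnp n p)
      {G. G (edge b v) \<and> (\<forall>w\<in>{..<n} - {b, v}. \<not> G (edge b w) \<and> \<not> G (edge v w))}
    = p * (1 - p) ^ (2 * (n - 2))"
proof -
  define W where "W = {..<n} - {b, v}"
  define T where "T = edges_at b W \<union> edges_at v W"
  have "{G. G (edge b v) \<and> (\<forall>w\<in>W. \<not> G (edge b w) \<and> \<not> G (edge v w))}
      = {G. (\<forall>e\<in>{edge b v}. G e) \<and> (\<forall>e\<in>T. \<not> G e)}"
    by (auto simp: T_def edges_at_def)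
  also have "measure_pmf.prob (Gnp n p) \<dots> = p ^ card {edge b v} * (1 - p) ^ card T"
  proof (rule prob_Gnp_edges)
    show "T \<subseteq> pot_edges n"
      using bv edges_at_subset_pot_edges[of b n W] edges_at_subset_pot_edges[of v n W] by (auto simp: T_def W_def)
    show "{edge b v} \<inter> T = {}"
      using edge_in_edges_at_iff[of b W v] edge_in_edges_at_iff[of v W b] by (auto simp: T_def W_def edge_commute)
  qed (use bv p in \<open>auto intro!: edge_in_pot_edges\<close>)
  also have "card T = 2 * (n - 2)"
    using bv disjoint_edges_at[of b v W W] card_lessThan_minus_list[of "[b, v]" n]
    by (simp add: T_def W_def card_Un_disjoint finite_edges_at card_edges_at)
  finally show ?thesis by (simp add: W_def)
qed

lemma prob_isolated_edge_le:
  assumes "0 \<le> p" "p \<le> 1"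
  shows "measure_pmf.prob (Gnp n p) {G. isolated_edge n G} \<le> real n ^ 2 * p * (1 - p) ^ (2 * (n - 2))"
proof -
  define A where "A bv = {G. fst bv \<noteq> snd bv \<and> G (edge (fst bv) (snd bv)) \<and>
    (\<forall>w\<in>{..<n} - {fst bv, snd bv}. \<not> G (edge (fst bv) w) \<and> \<not> G (edge (snd bv) w))}" for bv
  have "{G. isolated_edge n G} \<subseteq> (\<Union>bv\<in>{..<n} \<times> {..<n}. A bv)"
  proof
    fix G assume "G \<in> {G. isolated_edge n G}"
    then obtain b v where "b < n" "v < n" "b \<noteq> v" "G (edge b v)"
      "\<forall>w<n. w \<noteq> b \<and> w \<noteq> v \<longrightarrow> \<not> G (edge b w) \<and> \<not> G (edge v w)"
      unfolding isolated_edge_def by blast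
    then have "G \<in> A (b, v)" "(b, v) \<in> {..<n} \<times> {..<n}" by (auto simp: A_def)
    then show "G \<in> (\<Union>bv\<in>{..<n} \<times> {..<n}. A bv)" by blast
  qed
  then have "measure_pmf.prob (Gnp n p) {G. isolated_edge n G} \<le> measure_pmf.prob (Gnp n p) (\<Union>bv\<in>{..<n} \<times> {..<n}. A bv)"
    by (rule measure_pmf_prob_mono)
  also have "\<dots> \<le> real (card ({..<n} \<times> {..<n})) * (p * (1 - p) ^ (2 * (n - 2)))"
  proof (rule measure_pmf_prob_UN_le_card)
    fix bv :: "nat \<times> nat" assume bv: "bv \<in> {..<n} \<times> {..<n}"
    show "measure_pmf.prob (Gnp n p) (A bv) \<le> p * (1 - p) ^ (2 * (n - 2))"
    proof (cases "fst bv = snd bv")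
      case False
      have "A bv = {G. G (edge (fst bv) (snd bv)) \<and>
          (\<forall>w\<in>{..<n} - {fst bv, snd bv}. \<not> G (edge (fst bv) w) \<and> \<not> G (edge (snd bv) w))}"
        using False by (auto simp: A_def)
      also have "measure_pmf.prob (Gnp n p) \<dots> = p * (1 - p) ^ (2 * (n - 2))"
        by (rule prob_isolated_edge_at) (use bv False assms in auto)
      finally show ?thesis by simp
    next
      case True
      then have "A bv = {}" by (simp add: A_def)
      then show ?thesis using assms by simp
    qed
  qed simp
  finally show ?thesis by (simp add: power2_eq_square mult.assoc)
qed

lemma prob_Gnp_neighbourhood_pattern:
  assumes ab: "a < n" "b < n" "a \<noteq> b" and W: "W \<subseteq> {..<n}" "a \<notin> W" "b \<notin> W"
    and F: "F \<subseteq> pot_edges n" "F \<inter> edges_at b W = {}" "F \<inter> edges_at a W = {}"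
    and p: "0 \<le> p" "p \<le> 1" and N: "N \<subseteq> W"
  shows "measure_pmf.prob (Gnp n p)
      {G. (\<forall>e\<in>F \<union> edges_at b N \<union> edges_at a N. G e) \<and> (\<forall>e\<in>edges_at b (W - N). \<not> G e)}
    = p ^ card F * ((p ^ 2) ^ card N * (1 - p) ^ card (W - N))"
proof -
  define S where "S = F \<union> edges_at b N \<union> edges_at a N"
  define T where "T = edges_at b (W - N)"
  have "finite W" using W(1) by (rule finite_subset) simp
  then have fin: "finite W" "finite N" "finite F"
    using finite_subset[OF N] finite_subset[OF F(1) finite_pot_edges] by auto
  have N': "a \<notin> N" "b \<notin> N" "N \<subseteq> {..<n}" using N W by auto
  have "F \<inter> edges_at b N = {}" "F \<inter> edges_at a N = {}"
    using F(2,3) N unfolding edges_at_def by blast+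
  moreover have "edges_at b N \<inter> edges_at a N = {}" using disjoint_edges_at N' ab by auto
  ultimately have disj: "F \<inter> edges_at b N = {}" "F \<inter> edges_at a N = {}" "edges_at b N \<inter> edges_at a N = {}"
    by blast+
  have card_S: "card S = card F + 2 * card N"
  proof -
    have "card S = card F + card (edges_at b N) + card (edges_at a N)"
      unfolding S_def using disj fin by (simp add: card_Un_disjoint finite_edges_at Int_Un_distrib2)
    then show ?thesis using N' by (simp add: card_edges_at)
  qed
  have "measure_pmf.prob (Gnp n p) {G. (\<forall>e\<in>S. G e) \<and> (\<forall>e\<in>T. \<not> G e)} = p ^ card S * (1 - p) ^ card T"
  proof (rule prob_Gnp_edges)
    show "S \<subseteq> pot_edges n"
      unfolding S_def using N' F ab edges_at_subset_pot_edges[of b n N] edges_at_subset_pot_edges[of a n N]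
      by (simp add: Un_least)
    show "T \<subseteq> pot_edges n"
      unfolding T_def using ab edges_at_subset_pot_edges[of b n "W - N"] W by auto
    have "F \<inter> T = {}" using F unfolding T_def edges_at_def by auto
    moreover have "edges_at b N \<inter> T = {}"
      unfolding T_def using N' by (intro disjoint_edges_at_same) auto
    moreover have "edges_at a N \<inter> T = {}"
      unfolding T_def using disjoint_edges_at[of a b N "W - N"] N' W ab by auto
    ultimately show "S \<inter> T = {}" unfolding S_def by blast
  qed (use p in auto)
  moreover have "card T = card (W - N)"
    unfolding T_def using W by (subst card_edges_at) auto
  ultimately show ?thesis
    using card_S unfolding S_def T_def by (simp add: power_add power_mult)
qed

text \<open>Given the forced edges \<open>F\<close>, each vertex \<open>w \<in> W\<close> independently satisfies
  \<open>w \<in> N(b) \<Longrightarrow> w \<in> N(a)\<close>, which has probability \<open>p\<^sup>2 + (1 - p)\<close>.\<close>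

lemma prob_dominated_config_le:
  assumes ab: "a < n" "b < n" "a \<noteq> b" and W: "W \<subseteq> {..<n}" "a \<notin> W" "b \<notin> W"
    and F: "F \<subseteq> pot_edges n" "F \<inter> edges_at b W = {}" "F \<inter> edges_at a W = {}"
    and p: "0 \<le> p" "p \<le> 1"
    and X: "X \<subseteq> {G. (\<forall>e\<in>F. G e) \<and> (\<forall>w\<in>W. G (edge b w) \<longrightarrow> G (edge a w))}"
  shows "measure_pmf.prob (Gnp n p) X \<le> p ^ card F * (p ^ 2 + (1 - p)) ^ card W"
proof -
  have finW: "finite W" using W finite_subset by blast
  define A where "A N = {G. (\<forall>e\<in>F \<union> edges_at b N \<union> edges_at a N. G e) \<and> (\<forall>e\<in>edges_at b (W - N). \<not> G e)}" for N
  have "X \<subseteq> (\<Union>N\<in>Pow W. A N)"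
  proof
    fix G assume "G \<in> X"
    then have G: "\<forall>e\<in>F. G e" "\<forall>w\<in>W. G (edge b w) \<longrightarrow> G (edge a w)" using X by auto
    define N where "N = {w\<in>W. G (edge b w)}"
    have "G \<in> A N" using G unfolding A_def N_def edges_at_def by auto
    moreover have "N \<in> Pow W" by (auto simp: N_def)
    ultimately show "G \<in> (\<Union>N\<in>Pow W. A N)" by blast
  qed
  then have "measure_pmf.prob (Gnp n p) X \<le> measure_pmf.prob (Gnp n p) (\<Union>N\<in>Pow W. A N)"
    by (rule measure_pmf_prob_mono)
  also have "\<dots> \<le> (\<Sum>N\<in>Pow W. measure_pmf.prob (Gnp n p) (A N))"
    by (rule measure_pmf_prob_UN_le) (use finW in auto)
  also have "\<dots> = (\<Sum>N\<in>Pow W. p ^ card F * ((\<Prod>w\<in>N. p ^ 2) * (\<Prod>w\<in>W - N. 1 - p)))"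
    unfolding A_def using prob_Gnp_neighbourhood_pattern[OF ab W F p] by (intro sum.cong) auto
  also have "\<dots> = p ^ card F * (\<Prod>w\<in>W. p ^ 2 + (1 - p))"
    by (simp only: sum_distrib_left prod_add[OF finW])
  finally show ?thesis by simp
qed

lemma sq_plus_one_minus_bounds: "0 \<le> p \<Longrightarrow> p \<le> (1::real) \<Longrightarrow> 0 \<le> p ^ 2 + (1 - p) \<and> p ^ 2 + (1 - p) \<le> 1"
  by (auto simp: power2_eq_square) (metis mult_left_le mult.commute)

lemma prob_dom_witness_adj_le:
  assumes "a < n" "b < n" "v < n" "0 \<le> p" "p \<le> 1"
  shows "measure_pmf.prob (Gnp n p) {G. dom_witness_adj n G a b v} \<le> p ^ 3 * (p ^ 2 + (1 - p)) ^ (n - 3)"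
proof (cases "distinct [a, b, v]")
  case True
  define W where "W = {..<n} - {a, b, v}"
  define F where "F = {edge a b, edge b v, edge a v}"
  have "measure_pmf.prob (Gnp n p) {G. dom_witness_adj n G a b v} \<le> p ^ card F * (p ^ 2 + (1 - p)) ^ card W"
  proof (rule prob_dominated_config_le)
    show "F \<subseteq> pot_edges n" using assms True by (auto simp: F_def intro!: edge_in_pot_edges)
    show "F \<inter> edges_at b W = {}" "F \<inter> edges_at a W = {}"
      using True unfolding F_def W_def
      by (auto simp: edge_in_edges_at_iff edge_notin_edges_at edge_commute[of a b] edge_commute[of a v]
          edge_commute[of b v])
  qed (use assms True in \<open>auto simp: W_def dom_witness_adj_def F_def\<close>)
  also have "card F = 3"
  proof -
    have "edge a b \<noteq> edge b v" "edge a b \<noteq> edge a v" "edge b v \<noteq> edge a v"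
      using True by (auto dest!: edge_eq_edgeD)
    then show ?thesis unfolding F_def by simp
  qed
  also have "(p ^ 2 + (1 - p)) ^ card W \<le> (p ^ 2 + (1 - p)) ^ (n - 3)"
    using sq_plus_one_minus_bounds[of p] assms card_lessThan_minus_list_ge[of n "[a, b, v]"]
    by (intro power_decreasing) (auto simp: W_def)
  finally show ?thesis using assms by (simp add: mult_left_mono)
next
  case False
  then have "{G. dom_witness_adj n G a b v} = {}" by (auto simp: dom_witness_adj_def)
  then show ?thesis using assms sq_plus_one_minus_bounds[of p] by simp
qed

lemma prob_dom_witness_nonadj_le:
  assumes "a < n" "b < n" "u < n" "v < n" "0 \<le> p" "p \<le> 1"
  shows "measure_pmf.prob (Gnp n p) {G. dom_witness_nonadj n G a b u v} \<le> p ^ 4 * (p ^ 2 + (1 - p)) ^ (n - 4)"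
proof (cases "distinct [a, b, u, v]")
  case True
  define W where "W = {..<n} - {a, b, u, v}"
  define F where "F = {edge b u, edge b v, edge a u, edge a v}"
  have "measure_pmf.prob (Gnp n p) {G. dom_witness_nonadj n G a b u v} \<le> p ^ card F * (p ^ 2 + (1 - p)) ^ card W"
  proof (rule prob_dominated_config_le)
    show "F \<subseteq> pot_edges n" using assms True by (auto simp: F_def intro!: edge_in_pot_edges)
    show "F \<inter> edges_at b W = {}" "F \<inter> edges_at a W = {}"
      using True unfolding F_def W_def by (auto simp: edge_in_edges_at_iff edge_notin_edges_at)
  qed (use assms True in \<open>auto simp: W_def dom_witness_nonadj_def F_def\<close>)
  also have "card F = 4"
  proof -
    have "edge b u \<noteq> edge b v" "edge b u \<noteq> edge a u" "edge b u \<noteq> edge a v"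
      "edge b v \<noteq> edge a u" "edge b v \<noteq> edge a v" "edge a u \<noteq> edge a v"
      using True by (auto dest!: edge_eq_edgeD)
    then show ?thesis unfolding F_def by simp
  qed
  also have "(p ^ 2 + (1 - p)) ^ card W \<le> (p ^ 2 + (1 - p)) ^ (n - 4)"
    using sq_plus_one_minus_bounds[of p] assms card_lessThan_minus_list_ge[of n "[a, b, u, v]"]
    by (intro power_decreasing) (auto simp: W_def)
  finally show ?thesis using assms by (simp add: mult_left_mono)
next
  case False
  then have "{G. dom_witness_nonadj n G a b u v} = {}" by (auto simp: dom_witness_nonadj_def)
  then show ?thesis using assms sq_plus_one_minus_bounds[of p] by simp
qed

lemma prob_isolated_or_leaf_le:
  assumes "0 \<le> p" "p \<le> 1"
  shows "measure_pmf.prob (Gnp n p) {G. \<exists>b<n. isolated n G b \<or> leaf n G b}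
    \<le> real n * (1 - p) ^ (n - 1) + real n * real (n - 1) * p * (1 - p) ^ (n - 2)"
proof -
  have "{G. \<exists>b<n. isolated n G b \<or> leaf n G b} = (\<Union>b\<in>{..<n}. {G. isolated n G b} \<union> {G. leaf n G b})"
    by auto
  also have "measure_pmf.prob (Gnp n p) \<dots> \<le> real (card {..<n}) * ((1 - p) ^ (n - 1) + real (n - 1) * p * (1 - p) ^ (n - 2))"
  proof (rule measure_pmf_prob_UN_le_card)
    fix b assume "b \<in> {..<n}"
    then show "measure_pmf.prob (Gnp n p) ({G. isolated n G b} \<union> {G. leaf n G b})
        \<le> (1 - p) ^ (n - 1) + real (n - 1) * p * (1 - p) ^ (n - 2)"
      using measure_pmf_prob_Un_le[of "Gnp n p" "{G. isolated n G b}" "{G. leaf n G b}"]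
        prob_isolated[of b n p] prob_leaf[of b n p] assms by simp
  qed simp
  finally show ?thesis by (simp add: distrib_left mult.assoc)
qed

lemma prob_dom_witness_adj_exists_le:
  assumes "0 \<le> p" "p \<le> 1"
  shows "measure_pmf.prob (Gnp n p) {G. \<exists>a<n. \<exists>b<n. \<exists>v<n. dom_witness_adj n G a b v}
    \<le> real n ^ 3 * (p ^ 3 * (p ^ 2 + (1 - p)) ^ (n - 3))"
proof -
  define V where "V = {..<n}"
  have "{G. \<exists>a<n. \<exists>b<n. \<exists>v<n. dom_witness_adj n G a b v}
      \<subseteq> (\<Union>(a, b, v)\<in>V \<times> V \<times> V. {G. dom_witness_adj n G a b v})"
    by (force simp: V_def)
  then have "measure_pmf.prob (Gnp n p) {G. \<exists>a<n. \<exists>b<n. \<exists>v<n. dom_witness_adj n G a b v}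
      \<le> measure_pmf.prob (Gnp n p) (\<Union>(a, b, v)\<in>V \<times> V \<times> V. {G. dom_witness_adj n G a b v})"
    by (rule measure_pmf_prob_mono)
  also have "\<dots> \<le> real (card (V \<times> V \<times> V)) * (p ^ 3 * (p ^ 2 + (1 - p)) ^ (n - 3))"
    by (rule measure_pmf_prob_UN_le_card) (auto simp: V_def assms intro!: prob_dom_witness_adj_le split: prod.splits)
  finally show ?thesis by (simp add: V_def card_cartesian_product power3_eq_cube)
qed

lemma prob_dom_witness_nonadj_exists_le:
  assumes "0 \<le> p" "p \<le> 1"
  shows "measure_pmf.prob (Gnp n p) {G. \<exists>a<n. \<exists>b<n. \<exists>u<n. \<exists>v<n. dom_witness_nonadj n G a b u v}
    \<le> real n ^ 4 * (p ^ 4 * (p ^ 2 + (1 - p)) ^ (n - 4))"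
proof -
  define V where "V = {..<n}"
  have "{G. \<exists>a<n. \<exists>b<n. \<exists>u<n. \<exists>v<n. dom_witness_nonadj n G a b u v}
      \<subseteq> (\<Union>(a, b, u, v)\<in>V \<times> V \<times> V \<times> V. {G. dom_witness_nonadj n G a b u v})"
    by (force simp: V_def)
  then have "measure_pmf.prob (Gnp n p) {G. \<exists>a<n. \<exists>b<n. \<exists>u<n. \<exists>v<n. dom_witness_nonadj n G a b u v}
      \<le> measure_pmf.prob (Gnp n p) (\<Union>(a, b, u, v)\<in>V \<times> V \<times> V \<times> V. {G. dom_witness_nonadj n G a b u v})"
    by (rule measure_pmf_prob_mono)
  also have "\<dots> \<le> real (card (V \<times> V \<times> V \<times> V)) * (p ^ 4 * (p ^ 2 + (1 - p)) ^ (n - 4))"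
    by (rule measure_pmf_prob_UN_le_card) (auto simp: V_def assms intro!: prob_dom_witness_nonadj_le split: prod.splits)
  finally show ?thesis by (simp add: V_def card_cartesian_product power4_eq_xxxx)
qed

lemma prob_dom_pairs_nonempty_le:
  assumes "0 \<le> p" "p \<le> 1"
  shows "measure_pmf.prob (Gnp n p) {G. dom_pairs n G \<noteq> {}} \<le>
    real n * (1 - p) ^ (n - 1) + real n * real (n - 1) * p * (1 - p) ^ (n - 2)
    + real n ^ 3 * (p ^ 3 * (p ^ 2 + (1 - p)) ^ (n - 3)) + real n ^ 4 * (p ^ 4 * (p ^ 2 + (1 - p)) ^ (n - 4))"
proof -
  define E1 where "E1 = {G. \<exists>b<n. isolated n G b \<or> leaf n G b}"
  define E3 where "E3 = {G. \<exists>a<n. \<exists>b<n. \<exists>v<n. dom_witness_adj n G a b v}"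
  define E4 where "E4 = {G. \<exists>a<n. \<exists>b<n. \<exists>u<n. \<exists>v<n. dom_witness_nonadj n G a b u v}"
  have "{G. dom_pairs n G \<noteq> {}} \<subseteq> E1 \<union> E3 \<union> E4"
  proof
    fix G assume "G \<in> {G. dom_pairs n G \<noteq> {}}"
    then obtain a b where ab: "(a, b) \<in> dom_pairs n G" by auto
    then have "a < n" "b < n" by (auto simp: dom_pairs_def dominates_def)
    with dom_witness_cases[OF ab] show "G \<in> E1 \<union> E3 \<union> E4"
      unfolding E1_def E3_def E4_def by blast
  qed
  then have "measure_pmf.prob (Gnp n p) {G. dom_pairs n G \<noteq> {}}
      \<le> measure_pmf.prob (Gnp n p) E1 + measure_pmf.prob (Gnp n p) E3 + measure_pmf.prob (Gnp n p) E4"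
    using measure_pmf_prob_Un_le[of "Gnp n p" "E1 \<union> E3" E4] measure_pmf_prob_Un_le[of "Gnp n p" E1 E3]
    by (smt (verit) measure_pmf_prob_mono)
  then show ?thesis
    using prob_isolated_or_leaf_le[OF assms, of n] prob_dom_witness_adj_exists_le[OF assms, of n]
      prob_dom_witness_nonadj_exists_le[OF assms, of n]
    unfolding E1_def E3_def E4_def by linarith
qed

lemma inverse_one_minus_sq_le: "0 \<le> p \<Longrightarrow> p \<le> 1/2 \<Longrightarrow> 1 / (1 - p)\<^sup>2 - 1 \<le> 8 * (p::real)"
proof -
  assume p: "0 \<le> p" "p \<le> 1/2"
  have "1/4 \<le> (1 - p)\<^sup>2" using power_mono[of "1/2" "1 - p" 2] p by (simp add: power_divide)
  then have "1 / (1 - p)\<^sup>2 - 1 = (1 - (1 - p)\<^sup>2) / (1 - p)\<^sup>2"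
    using p by (simp add: diff_divide_distrib)
  also have "1 - (1 - p)\<^sup>2 = p * (2 - p)" by (simp add: power2_eq_square algebra_simps)
  also have "p * (2 - p) / (1 - p)\<^sup>2 \<le> p * 2 / (1/4)"
    using \<open>1/4 \<le> (1 - p)\<^sup>2\<close> p by (intro frac_le) (auto simp: mult_left_mono)
  finally show ?thesis by simp
qed

lemma prob_few_leaves_le:
  assumes n: "n \<ge> 3" and p: "0 < p" "p \<le> 1/2" and C: "C > 0" "2 * C \<le> m"
    and m: "m \<le> real n * real (n - 1) * p * (1 - p) ^ (n - 2)"
  shows "measure_pmf.prob (Gnp n p) {G. real (card {b. b < n \<and> leaf n G b}) < C}
          \<le> 4 / m + 16 / (real n * real (n - 1) * p) + 32 * p"
proof -
  define q where "q = 1 - p"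
  define Q where "Q = q ^ (n - 3)"
  define N where "N = real n * real (n - 1)"
  define \<mu> where "\<mu> = N * p * q * Q"
  define \<beta> where "\<beta> = (p + real (n - 1) ^ 2 * p ^ 2) * Q ^ 2"
  have q: "1/2 \<le> q" "q \<le> 1" using p by (auto simp: q_def)
  have "0 < Q" using q by (simp add: Q_def)
  have "N > 0" using n by (simp add: N_def)
  have "n - 2 = Suc (n - 3)" using n by simp
  then have qQ: "(1 - p) ^ (n - 2) = q * Q" by (simp add: q_def Q_def)
  have QQ: "(1 - p) ^ (2 * (n - 3)) = Q ^ 2" unfolding q_def Q_def by (metis power_mult mult.commute)
  have "m \<le> \<mu>" using m by (simp add: \<mu>_def N_def qQ mult.assoc)
  have "measure_pmf.prob (Gnp n p) {G. real (card {i\<in>{..<n}. G \<in> {G. leaf n G i}}) < C}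
      \<le> 4 * (\<mu> + real (card {..<n}) * (real (card {..<n}) - 1) * \<beta> - \<mu>\<^sup>2) / \<mu>\<^sup>2"
  proof (rule prob_count_less_le_half_mean)
    show "\<mu> = (\<Sum>i\<in>{..<n}. measure_pmf.prob (Gnp n p) {G. leaf n G i})"
      using p n by (simp add: prob_leaf \<mu>_def N_def qQ of_nat_diff)
    show "measure_pmf.prob (Gnp n p) ({G. leaf n G i} \<inter> {G. leaf n G j}) \<le> \<beta>"
      if "i \<in> {..<n}" "j \<in> {..<n}" "i \<noteq> j" for i j
      using prob_leaf_pair_le[of i n j p] that p by (simp add: \<beta>_def QQ)
  qed (use C \<open>m \<le> \<mu>\<close> in auto)
  also have "real (card {..<n}) * (real (card {..<n}) - 1) = N" using n by (simp add: N_def of_nat_diff)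
  also have "4 * (\<mu> + N * \<beta> - \<mu>\<^sup>2) / \<mu>\<^sup>2 = 4 / \<mu> + 4 / (N * p * q ^ 2) + 4 * real (n - 1) ^ 2 / (N * q ^ 2) - 4"
    using \<open>N > 0\<close> \<open>0 < Q\<close> p q unfolding \<mu>_def \<beta>_def by (simp add: field_simps power2_eq_square)
  also have "4 / \<mu> \<le> 4 / m" using \<open>m \<le> \<mu>\<close> C by (intro divide_left_mono) auto
  also have "4 / (N * p * q ^ 2) \<le> 16 / (N * p)"
  proof -
    have "1/4 \<le> q ^ 2" using power_mono[OF q(1), of 2] by (simp add: power_divide)
    then show ?thesis using \<open>N > 0\<close> p by (simp add: divide_simps)
  qed
  also have "4 * real (n - 1) ^ 2 / (N * q ^ 2) \<le> 4 / q ^ 2"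
  proof -
    have "real (n - 1) ^ 2 \<le> N" unfolding N_def power2_eq_square by (intro mult_right_mono) auto
    then show ?thesis using \<open>N > 0\<close> q by (simp add: divide_simps)
  qed
  also have "4 / m + 16 / (N * p) + 4 / q ^ 2 - 4 \<le> 4 / m + 16 / (N * p) + 32 * p"
    using inverse_one_minus_sq_le[of p] p unfolding q_def by simp
  finally show ?thesis by (simp add: N_def)
qed

lemma prob_no_isolated_le:
  assumes n: "n \<ge> 2" and p: "0 \<le> p" "p \<le> 1/2"
    and m: "2 \<le> m" "m \<le> real n * (1 - p) ^ (n - 1)"
  shows "measure_pmf.prob (Gnp n p) {G. real (card {b. b < n \<and> isolated n G b}) < 1} \<le> 4 / m + 32 * p"
proof -
  define q where "q = 1 - p"
  define Q where "Q = q ^ (n - 2)"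
  define \<mu> where "\<mu> = real n * q * Q"
  have q: "1/2 \<le> q" "q \<le> 1" using p by (auto simp: q_def)
  have "0 < Q" using q by (simp add: Q_def)
  have "real n > 0" using n by simp
  have "n - 1 = Suc (n - 2)" using n by simp
  then have qQ: "(1 - p) ^ (n - 1) = q * Q" by (simp add: q_def Q_def)
  have QQ: "(1 - p) ^ (2 * (n - 2)) = Q ^ 2" unfolding q_def Q_def by (metis power_mult mult.commute)
  have "m \<le> \<mu>" using m(2) unfolding qQ \<mu>_def by (simp add: mult.assoc)
  have "measure_pmf.prob (Gnp n p) {G. real (card {i\<in>{..<n}. G \<in> {G. isolated n G i}}) < 1}
      \<le> 4 * (\<mu> + real (card {..<n}) * (real (card {..<n}) - 1) * Q ^ 2 - \<mu>\<^sup>2) / \<mu>\<^sup>2"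
  proof (rule prob_count_less_le_half_mean)
    show "\<mu> = (\<Sum>i\<in>{..<n}. measure_pmf.prob (Gnp n p) {G. isolated n G i})"
      using p prob_isolated[of _ n p] unfolding qQ by (simp add: \<mu>_def mult.assoc)
    show "measure_pmf.prob (Gnp n p) ({G. isolated n G i} \<inter> {G. isolated n G j}) \<le> Q ^ 2"
      if "i \<in> {..<n}" "j \<in> {..<n}" "i \<noteq> j" for i j
      using prob_isolated_pair_le[of i n j p] that p by (simp add: QQ)
  qed (use m \<open>m \<le> \<mu>\<close> in auto)
  also have "4 * (\<mu> + real (card {..<n}) * (real (card {..<n}) - 1) * Q ^ 2 - \<mu>\<^sup>2) / \<mu>\<^sup>2
      = 4 / \<mu> + 4 * (real n - 1) / (real n * q ^ 2) - 4"
    using \<open>real n > 0\<close> \<open>0 < Q\<close> q unfolding \<mu>_def by (simp add: field_simps power2_eq_square)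
  also have "4 / \<mu> \<le> 4 / m" using \<open>m \<le> \<mu>\<close> m by (intro divide_left_mono) auto
  also have "4 * (real n - 1) / (real n * q ^ 2) \<le> 4 / q ^ 2"
    using \<open>real n > 0\<close> q by (simp add: divide_simps)
  also have "4 / m + 4 / q ^ 2 - 4 \<le> 4 / m + 32 * p"
    using inverse_one_minus_sq_le[of p] p unfolding q_def by simp
  finally show ?thesis by simp
qed

section \<open>Elementary estimates\<close>

lemma one_minus_power_le_exp: "0 \<le> p \<Longrightarrow> p \<le> 1 \<Longrightarrow> (1 - p) ^ k \<le> exp (- p * real k)"
proof -
  assume p: "0 \<le> p" "p \<le> 1"
  have "(1 - p) ^ k \<le> exp (- p) ^ k"
    using p exp_ge_add_one_self[of "- p"] by (intro power_mono) auto
  then show ?thesis by (simp add: exp_of_nat_mult[symmetric] mult.commute)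
qed

lemma exp_le_one_minus_power: "0 \<le> p \<Longrightarrow> p \<le> 1/2 \<Longrightarrow> exp (- (p + 2 * p ^ 2) * real k) \<le> (1 - p) ^ k"
proof -
  assume p: "0 \<le> p" "p \<le> 1/2"
  have "exp (- (p + 2 * p ^ 2)) \<le> exp (ln (1 - p))" using ln_one_minus_pos_lower_bound[OF p] by simp
  then have "exp (- (p + 2 * p ^ 2)) ^ k \<le> (1 - p) ^ k" using p by (intro power_mono) auto
  then show ?thesis by (simp add: exp_of_nat_mult[symmetric] mult.commute)
qed

lemma exp_neg_div_e_le_one_minus_power:
  assumes p: "0 \<le> p" "p \<le> 1/2" "2 * p ^ 2 * real n \<le> 1" and k: "k \<le> n"
  shows "exp (- (real n * p)) / exp 1 \<le> (1 - p) ^ k"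
proof -
  have "exp (- (real n * p) - 1) \<le> exp (- (p + 2 * p ^ 2) * real n)"
    using p by (simp add: algebra_simps)
  also have "\<dots> \<le> (1 - p) ^ n" by (rule exp_le_one_minus_power) (use p in auto)
  also have "\<dots> \<le> (1 - p) ^ k" using p k by (intro power_decreasing) auto
  finally show ?thesis by (simp add: exp_diff)
qed

lemma power_le_exp_quarter:
  assumes "0 \<le> x" "k > 0"
  shows "x ^ k \<le> (4 * real k) ^ k * exp (x / 4)"
proof -
  have kpos: "0 < 4 * real k" using assms by simp
  have "x / (4 * real k) \<le> exp (x / (4 * real k))"
    using exp_ge_add_one_self[of "x / (4 * real k)"] by linarith
  then have "(x / (4 * real k)) ^ k \<le> exp (x / (4 * real k)) ^ k"
    using assms kpos by (intro power_mono) auto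
  also have "\<dots> = exp (x / 4)" using assms by (simp add: exp_of_nat_mult[symmetric])
  finally show ?thesis using kpos by (simp add: power_divide divide_simps mult.commute)
qed

lemma mult_exp_neg_antimono:
  fixes x L :: real
  assumes "1 \<le> x" "x \<le> L"
  shows "L * exp (- L) \<le> x * exp (- x)"
proof -
  have "L \<le> x * (1 + (L - x))" using assms mult_left_mono[of 1 x "L - x"] by (simp add: algebra_simps)
  also have "\<dots> \<le> x * exp (L - x)" using assms by (intro mult_left_mono) auto
  finally have "L * exp (- L) \<le> x * exp (L - x) * exp (- L)" by (intro mult_right_mono) auto
  also have "\<dots> = x * exp (- x)" by (simp add: mult.assoc flip: exp_add)
  finally show ?thesis .
qed

lemma one_plus_mult_exp_neg_antimono:
  fixes x L :: real
  assumes "0 \<le> L" "L \<le> x"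
  shows "(1 + x) * exp (- x) \<le> (1 + L) * exp (- L)"
proof -
  have "1 + x \<le> (1 + L) * (1 + (x - L))"
    using assms mult_left_mono[of L x L] by (simp add: algebra_simps)
  also have "\<dots> \<le> (1 + L) * exp (x - L)" using assms by (intro mult_left_mono) auto
  finally have "(1 + x) * exp (- x) \<le> (1 + L) * exp (x - L) * exp (- x)" by (intro mult_right_mono) auto
  also have "\<dots> = (1 + L) * exp (- L)" by (simp add: mult.assoc flip: exp_add)
  finally show ?thesis .
qed

lemma sq_plus_one_minus_power_le_exp:
  assumes "0 \<le> p" "p \<le> 1/2"
  shows "(p ^ 2 + (1 - p)) ^ k \<le> exp (- p * real k / 2)"
proof -
  have "p ^ 2 + (1 - p) \<le> 1 + (- p / 2)"
    using assms mult_left_mono[of p "1/2" p] by (simp add: power2_eq_square)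
  also have "\<dots> \<le> exp (- p / 2)" by (rule exp_ge_add_one_self)
  finally have "(p ^ 2 + (1 - p)) ^ k \<le> exp (- p / 2) ^ k"
    using sq_plus_one_minus_bounds[of p] assms by (intro power_mono) auto
  then show ?thesis by (simp add: exp_of_nat_mult[symmetric] mult.commute)
qed

lemma prob_adj_dom_pairs_empty_ge:
  assumes "0 \<le> p" "p \<le> 1"
  shows "1 - real n ^ 2 * p \<le> measure_pmf.prob (Gnp n p) {G. adj_dom_pairs n G = {}}"
proof -
  have sub: "{G. \<not> adj_dom_pairs n G = {}} \<subseteq> (\<Union>e\<in>pot_edges n. {G. (\<forall>e'\<in>{e}. G e') \<and> (\<forall>e'\<in>{}. \<not> G e')})"
  proof
    fix G assume "G \<in> {G. \<not> adj_dom_pairs n G = {}}"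
    then obtain a b where "dominates n G a b" "adj G a b" by (auto simp: adj_dom_pairs_def)
    then have "edge a b \<in> pot_edges n" "G (edge a b)"
      by (auto simp: dominates_def adj_iff_edge intro: edge_in_pot_edges)
    then show "G \<in> (\<Union>e\<in>pot_edges n. {G. (\<forall>e'\<in>{e}. G e') \<and> (\<forall>e'\<in>{}. \<not> G e')})" by auto
  qed
  have "measure_pmf.prob (Gnp n p) (\<Union>e\<in>pot_edges n. {G. (\<forall>e'\<in>{e}. G e') \<and> (\<forall>e'\<in>{}. \<not> G e')})
      \<le> real (card (pot_edges n)) * p"
  proof (rule measure_pmf_prob_UN_le_card[OF finite_pot_edges])
    fix e assume "e \<in> pot_edges n"
    then show "measure_pmf.prob (Gnp n p) {G. (\<forall>e'\<in>{e}. G e') \<and> (\<forall>e'\<in>{}. \<not> G e')} \<le> p"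
      using prob_Gnp_edges[of "{e}" n "{}" p] assms by simp
  qed
  moreover have "real (card (pot_edges n)) * p \<le> real n ^ 2 * p"
    using card_pot_edges_le[of n] assms by (intro mult_right_mono) auto
  ultimately show ?thesis
    using measure_pmf_prob_ge_if_compl_subset[OF sub, of "Gnp n p"] by linarith
qed

lemma leaf_mean_ge_exp:
  fixes n :: nat and p w :: real
  defines "L \<equiv> ln (real n) + ln (ln (real n)) - w"
  assumes n: "n \<ge> 3" and p: "0 \<le> p" "p \<le> 1/2" "2 * p ^ 2 * real n \<le> 1"
    and x: "1 \<le> real n * p" "real n * p \<le> L" and L: "ln (real n) \<le> L"
  shows "exp w / (2 * exp 1) \<le> real n * real (n - 1) * p * (1 - p) ^ (n - 2)"
proof -
  define x where "x = real n * p"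
  have "ln (real n) > 0" using n by simp
  have "exp (- L) = exp w / (real n * ln (real n))"
    using n \<open>ln (real n) > 0\<close> unfolding L_def by (simp add: exp_diff exp_add exp_minus field_simps)
  then have "L * (exp w / (real n * ln (real n))) \<le> x * exp (- x)"
    using mult_exp_neg_antimono[of x L] x by (simp add: x_def)
  moreover have "exp w / real n \<le> L * (exp w / (real n * ln (real n)))"
    using L \<open>ln (real n) > 0\<close> n by (simp add: divide_simps)
  ultimately have "exp w / real n \<le> x * exp (- x)" by linarith
  moreover have "1 / 2 \<le> real (n - 1) / real n" using n by (auto simp: divide_simps)
  ultimately have "exp w * (1 / 2) \<le> real (n - 1) * (x * exp (- x))"
    using mult_mono[of "1/2" "real (n - 1) / real n" "exp w / real n * real n" "x * exp (- x) * real n"] n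
    by (simp add: divide_simps mult.commute)
  then have "exp w / 2 / exp 1 \<le> real (n - 1) * (x * exp (- x)) / exp 1"
    by (intro divide_right_mono) auto
  also have "\<dots> = real n * real (n - 1) * p * (exp (- x) / exp 1)" by (simp add: x_def)
  also have "\<dots> \<le> real n * real (n - 1) * p * (1 - p) ^ (n - 2)"
    unfolding x_def using p exp_neg_div_e_le_one_minus_power[OF p, of "n - 2"]
    by (intro mult_left_mono) auto
  finally show ?thesis by simp
qed

lemma leaf_mean_ge:
  fixes n :: nat and p w :: real
  defines "L \<equiv> ln (real n) + ln (ln (real n)) - w"
  assumes n: "n \<ge> 3" and p: "0 \<le> p" "p \<le> 1/2" "2 * p ^ 2 * real n \<le> 1"
    and x: "real n * p \<le> L" and L: "ln (real n) \<le> L"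
  shows "min (real n * real (n - 1) * p / exp 2) (exp w / (2 * exp 1))
    \<le> real n * real (n - 1) * p * (1 - p) ^ (n - 2)"
proof (cases "real n * p \<le> 1")
  case True
  define N where "N = real n * real (n - 1)"
  have "1 / exp 2 \<le> exp (- (real n * p)) / exp 1"
    using True exp_le_cancel_iff[of "-2" "- (real n * p) - 1"] by (simp add: exp_diff exp_minus divide_simps)
  also have "\<dots> \<le> (1 - p) ^ (n - 2)"
    using exp_neg_div_e_le_one_minus_power[OF p, of "n - 2"] by simp
  finally have "N * p * (1 / exp 2) \<le> N * p * (1 - p) ^ (n - 2)"
    using p by (intro mult_left_mono) (auto simp: N_def)
  then show ?thesis by (simp add: N_def min_le_iff_disj)
next
  case False
  then show ?thesis
    using leaf_mean_ge_exp[OF n p, of w] x L by (simp add: L_def min_le_iff_disj)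
qed

lemma prob_many_adj_dom_pairs_ge:
  assumes "n \<ge> 3" "0 < p" "p \<le> 1/2" "C > 0" "2 * C \<le> m"
    and "m \<le> real n * real (n - 1) * p * (1 - p) ^ (n - 2)"
  shows "1 - (4 / m + 16 / (real n * real (n - 1) * p) + 32 * p)
    \<le> measure_pmf.prob (Gnp n p) {G. C \<le> real (card (adj_dom_pairs n G))}"
proof -
  have "{G. \<not> C \<le> real (card (adj_dom_pairs n G))} \<subseteq> {G. real (card {b. b < n \<and> leaf n G b}) < C}"
    using card_leaves_le_card_adj_dom_pairs by (auto simp: not_le) (meson le_less_trans of_nat_le_iff)
  from measure_pmf_prob_ge_if_compl_subset[OF this, of "Gnp n p"] show ?thesis
    using prob_few_leaves_le[OF assms] by (meson diff_left_mono order_trans)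
qed

lemma prob_many_nonadj_dom_pairs_ge_isolated:
  assumes "n \<ge> 2" "0 \<le> p" "p \<le> 1/2" "2 \<le> m" "m \<le> real n * (1 - p) ^ (n - 1)" "C \<le> real n - 1"
  shows "1 - (4 / m + 32 * p) \<le> measure_pmf.prob (Gnp n p) {G. C \<le> real (card (nonadj_dom_pairs n G))}"
proof -
  have "{G. \<not> C \<le> real (card (nonadj_dom_pairs n G))} \<subseteq> {G. real (card {b. b < n \<and> isolated n G b}) < 1}"
  proof safe
    fix G assume "\<not> C \<le> real (card (nonadj_dom_pairs n G))"
    then have "\<not> (\<exists>b<n. isolated n G b)"
      using card_nonadj_dom_pairs_ge_if_isolated assms(6) by force
    then show "real (card {b. b < n \<and> isolated n G b}) < 1" by simp
  qed
  from measure_pmf_prob_ge_if_compl_subset[OF this, of "Gnp n p"] show ?thesis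
    using prob_no_isolated_le[OF assms(1-5)] by (meson diff_left_mono order_trans)
qed

lemma prob_many_nonadj_dom_pairs_ge_leaves:
  assumes "n \<ge> 3" "0 < p" "p \<le> 1/2" "C > 0" "2 * C \<le> m"
    and "m \<le> real n * real (n - 1) * p * (1 - p) ^ (n - 2)"
  shows "1 - (4 / m + 16 / (real n * real (n - 1) * p) + 32 * p + measure_pmf.prob (Gnp n p) {G. isolated_edge n G})
    \<le> measure_pmf.prob (Gnp n p) {G. C \<le> real (card (nonadj_dom_pairs n G))}"
proof -
  have "{G. \<not> C \<le> real (card (nonadj_dom_pairs n G))}
      \<subseteq> {G. real (card {b. b < n \<and> leaf n G b}) < C} \<union> {G. isolated_edge n G}"
    using card_leaves_le_card_nonadj_dom_pairs by (auto simp: not_le) (meson le_less_trans of_nat_le_iff)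
  from measure_pmf_prob_ge_if_compl_subset[OF this, of "Gnp n p"] show ?thesis
    using prob_few_leaves_le[OF assms] measure_pmf_prob_Un_le[of "Gnp n p"
      "{G. real (card {b. b < n \<and> leaf n G b}) < C}" "{G. isolated_edge n G}"]
    by (smt (verit))
qed

lemma prob_isolated_edge_le_exp:
  assumes n: "n \<ge> 3" and p: "0 \<le> p" "p \<le> 1/2" and x: "3/4 * ln (real n) \<le> real n * p"
  shows "measure_pmf.prob (Gnp n p) {G. isolated_edge n G} \<le> 2 * exp 2 * exp (- ln (real n) / 8)"
proof -
  define x where "x = real n * p"
  have "0 \<le> x" using p by (simp add: x_def)
  have "(1 - p) ^ (2 * (n - 2)) \<le> exp (- p * real (2 * (n - 2)))"
    by (rule one_minus_power_le_exp) (use p in auto)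
  also have "\<dots> \<le> exp (- 2 * x + 2)"
    using n p by (simp add: x_def of_nat_diff algebra_simps)
  finally have q: "(1 - p) ^ (2 * (n - 2)) \<le> exp 2 * (exp (- (x / 2)) * exp (- (3/2) * x))"
    by (simp add: mult_exp_exp)
  have "x / 2 \<le> exp (x / 2)" using exp_ge_add_one_self[of "x / 2"] by linarith
  then have xe: "x * exp (- (x / 2)) \<le> 2" by (simp add: exp_minus divide_simps)
  have "exp (- (3/2) * x) \<le> exp (- (9/8) * ln (real n))" using x by (simp add: x_def mult.commute)
  also have "\<dots> = exp (- ln (real n) / 8) * exp (- ln (real n))"
  proof -
    have "- (9/8) * ln (real n) = - ln (real n) / 8 + - ln (real n)" by simp
    then show ?thesis by (metis mult_exp_exp)
  qed
  also have "exp (- ln (real n)) = 1 / real n"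
    using n by (simp add: exp_minus inverse_eq_divide)
  finally have e: "exp (- (3/2) * x) \<le> exp (- ln (real n) / 8) / real n" by simp
  have "real n ^ 2 * p * (1 - p) ^ (2 * (n - 2)) \<le> real n ^ 2 * p * (exp 2 * (exp (- (x / 2)) * exp (- (3/2) * x)))"
    using q p by (intro mult_left_mono) auto
  also have "\<dots> = exp 2 * real n * (x * exp (- (x / 2))) * exp (- (3/2) * x)"
    by (simp add: x_def power2_eq_square)
  also have "\<dots> \<le> exp 2 * real n * 2 * (exp (- ln (real n) / 8) / real n)"
    using xe e \<open>0 \<le> x\<close> by (intro mult_mono) auto
  also have "\<dots> = 2 * exp 2 * exp (- ln (real n) / 8)" using n by simp
  finally show ?thesis using prob_isolated_edge_le[of p n] p by linarith
qed

definition nonadj_failure_bound :: "nat \<Rightarrow> real \<Rightarrow> real" where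
  "nonadj_failure_bound n w = 4 * exp 1 * exp (- ln (real n) / 4) + 24 * ln (real n) / real n
     + 8 * exp 1 * exp (- w) + 64 / (3 * real (n - 1) * ln (real n)) + 64 * ln (real n) / real n
     + 2 * exp 2 * exp (- ln (real n) / 8)"

lemma prob_many_nonadj_dom_pairs_ge_sparse:
  assumes n: "n \<ge> 3" and p: "0 \<le> p" "p \<le> 1/2" "2 * p ^ 2 * real n \<le> 1"
    and x: "real n * p \<le> 3/4 * ln (real n)"
    and C: "C \<le> real n - 1" and n_large: "2 \<le> exp (ln (real n) / 4) / exp 1"
  shows "1 - (4 * exp 1 * exp (- ln (real n) / 4) + 24 * ln (real n) / real n)
    \<le> measure_pmf.prob (Gnp n p) {G. C \<le> real (card (nonadj_dom_pairs n G))}"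
proof -
  define m where "m = exp (ln (real n) / 4) / exp 1"
  have "real n > 0" using n by simp
  have "exp (- (3/4 * ln (real n))) / exp 1 \<le> exp (- (real n * p)) / exp 1"
    using x by (intro divide_right_mono) auto
  also have "\<dots> \<le> (1 - p) ^ (n - 1)" by (rule exp_neg_div_e_le_one_minus_power) (use p in auto)
  finally have "real n * (exp (- (3/4 * ln (real n))) / exp 1) \<le> real n * (1 - p) ^ (n - 1)"
    by (intro mult_left_mono) auto
  moreover have "real n * (exp (- (3/4 * ln (real n))) / exp 1) = m"
    using \<open>real n > 0\<close> by (simp add: m_def exp_minus field_simps flip: exp_add exp_diff)
  ultimately have "1 - (4 / m + 32 * p) \<le> measure_pmf.prob (Gnp n p) {G. C \<le> real (card (nonadj_dom_pairs n G))}"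
    using n p C n_large by (intro prob_many_nonadj_dom_pairs_ge_isolated) (auto simp: m_def)
  moreover have "4 / m = 4 * exp 1 * exp (- ln (real n) / 4)" by (simp add: m_def exp_minus divide_simps)
  moreover have "32 * p \<le> 24 * ln (real n) / real n"
    using x \<open>real n > 0\<close> by (simp add: divide_simps mult.commute)
  ultimately show ?thesis by linarith
qed

lemma prob_many_nonadj_dom_pairs_ge_moderate:
  fixes n :: nat and p w C :: real
  defines "L \<equiv> ln (real n) + ln (ln (real n)) - w"
  assumes n: "n \<ge> 3" "4/3 \<le> ln (real n)" and p: "0 \<le> p" "p \<le> 1/2" "2 * p ^ 2 * real n \<le> 1"
    and x: "3/4 * ln (real n) < real n * p" "real n * p < L" and L: "ln (real n) \<le> L" "L \<le> 2 * ln (real n)"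
    and C: "C > 0" "2 * C \<le> exp w / (2 * exp 1)"
  shows "1 - (8 * exp 1 * exp (- w) + 64 / (3 * real (n - 1) * ln (real n)) + 64 * ln (real n) / real n
      + 2 * exp 2 * exp (- ln (real n) / 8))
    \<le> measure_pmf.prob (Gnp n p) {G. C \<le> real (card (nonadj_dom_pairs n G))}"
proof -
  define m where "m = exp w / (2 * exp 1)"
  have "real n > 0" "real (n - 1) > 0" "ln (real n) > 0" using n by auto
  have "1 \<le> real n * p" using x n by linarith
  then have "p > 0" using \<open>real n > 0\<close> p(1) by (cases "p = 0") auto
  have "m \<le> real n * real (n - 1) * p * (1 - p) ^ (n - 2)"
    unfolding m_def using n p \<open>1 \<le> real n * p\<close> x L by (intro leaf_mean_ge_exp) (auto simp: L_def)
  then have "1 - (4 / m + 16 / (real n * real (n - 1) * p) + 32 * p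
      + measure_pmf.prob (Gnp n p) {G. isolated_edge n G})
    \<le> measure_pmf.prob (Gnp n p) {G. C \<le> real (card (nonadj_dom_pairs n G))}"
    using n \<open>p > 0\<close> p C by (intro prob_many_nonadj_dom_pairs_ge_leaves) (auto simp: m_def)
  moreover have "4 / m = 8 * exp 1 * exp (- w)" by (simp add: m_def exp_minus divide_simps)
  moreover have "16 / (real n * real (n - 1) * p) \<le> 64 / (3 * real (n - 1) * ln (real n))"
  proof -
    have "3 * real (n - 1) * ln (real n) \<le> 4 * (real n * real (n - 1) * p)"
      using x \<open>real (n - 1) > 0\<close> mult_left_mono[of "3 * ln (real n)" "4 * (real n * p)" "real (n - 1)"]
      by (simp add: algebra_simps)
    then have "64 / (4 * (real n * real (n - 1) * p)) \<le> 64 / (3 * real (n - 1) * ln (real n))"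
      using \<open>real (n - 1) > 0\<close> \<open>ln (real n) > 0\<close> \<open>real n > 0\<close> \<open>p > 0\<close>
      by (intro divide_left_mono) auto
    then show ?thesis by (simp add: mult.commute mult.left_commute)
  qed
  moreover have "32 * p \<le> 64 * ln (real n) / real n"
    using x L \<open>real n > 0\<close> by (simp add: divide_simps mult.commute)
  moreover have "measure_pmf.prob (Gnp n p) {G. isolated_edge n G} \<le> 2 * exp 2 * exp (- ln (real n) / 8)"
    using n p x by (intro prob_isolated_edge_le_exp) auto
  ultimately show ?thesis by argo
qed

lemma prob_many_nonadj_dom_pairs_ge:
  fixes n :: nat and p w C :: real
  defines "L \<equiv> ln (real n) + ln (ln (real n)) - w"
  assumes n: "n \<ge> 3" "4/3 \<le> ln (real n)" and p: "0 \<le> p" "p \<le> 1/2" "2 * p ^ 2 * real n \<le> 1"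
    and x: "real n * p < L" and L: "ln (real n) \<le> L" "L \<le> 2 * ln (real n)"
    and C: "C > 0" "2 * C \<le> exp w / (2 * exp 1)" "C \<le> real n - 1"
    and n_large: "2 \<le> exp (ln (real n) / 4) / exp 1"
  shows "1 - nonadj_failure_bound n w \<le> measure_pmf.prob (Gnp n p) {G. C \<le> real (card (nonadj_dom_pairs n G))}"
proof -
  have "ln (real n) > 0" "real (n - 1) > 0" using n by auto
  then have nonneg: "0 \<le> 4 * exp 1 * exp (- ln (real n) / 4)" "0 \<le> 24 * ln (real n) / real n"
    "0 \<le> 8 * exp 1 * exp (- w)" "0 \<le> 64 / (3 * real (n - 1) * ln (real n))"
    "0 \<le> 64 * ln (real n) / real n" "0 \<le> 2 * exp 2 * exp (- ln (real n) / 8)"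
    by auto
  show ?thesis
  proof (cases "real n * p \<le> 3/4 * ln (real n)")
    case True
    then show ?thesis
      using prob_many_nonadj_dom_pairs_ge_sparse[OF n(1) p True C(3) n_large] nonneg
      unfolding nonadj_failure_bound_def by argo
  next
    case False
    then show ?thesis
      using prob_many_nonadj_dom_pairs_ge_moderate[of n p w C] n p x L C nonneg
      unfolding nonadj_failure_bound_def L_def by argo
  qed
qed

lemma isolated_leaf_term_le:
  fixes n :: nat and p w :: real
  defines "L \<equiv> ln (real n) + ln (ln (real n)) + w"
  assumes n: "n \<ge> 2" "1 \<le> ln (real n)" and w: "0 \<le> w" "w \<le> ln (ln (real n))" "ln (ln (real n)) \<le> ln (real n)"
    and p: "0 \<le> p" "p \<le> 1/2" and x: "L \<le> real n * p"
  shows "real n * (1 - p) ^ (n - 1) + real n * real (n - 1) * p * (1 - p) ^ (n - 2) \<le> 4 * exp 1 * exp (- w)"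
proof -
  define x where "x = real n * p"
  have "real n > 0" "ln (real n) > 0" "0 \<le> ln (ln (real n))" using n by auto
  have "0 \<le> L" "L \<le> x" using \<open>ln (real n) > 0\<close> w x by (auto simp: L_def x_def)
  have q: "(1 - p) ^ (n - k) \<le> exp 1 * exp (- x)" if "k \<le> 2" for k
  proof -
    have "(1 - p) ^ (n - k) \<le> exp (- p * real (n - k))" by (rule one_minus_power_le_exp) (use p in auto)
    also have "\<dots> \<le> exp (1 - x)"
      using n p that mult_right_mono[of "real k" 2 p] by (simp add: x_def of_nat_diff algebra_simps)
    finally show ?thesis by (simp add: exp_diff exp_minus divide_inverse)
  qed
  have "real (n - 1) * p \<le> x" using p by (simp add: x_def mult_right_mono)
  then have "real (n - 1) * p * (1 - p) ^ (n - 2) \<le> x * (exp 1 * exp (- x))"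
    using q[of 2] p \<open>0 \<le> L\<close> \<open>L \<le> x\<close> by (intro mult_mono) auto
  then have "real n * real (n - 1) * p * (1 - p) ^ (n - 2) \<le> real n * x * (exp 1 * exp (- x))"
    using \<open>real n > 0\<close> mult_left_mono by (fastforce simp: mult.assoc)
  moreover have "real n * (1 - p) ^ (n - 1) \<le> real n * (exp 1 * exp (- x))"
    using q[of 1] \<open>real n > 0\<close> by (intro mult_left_mono) auto
  ultimately have "real n * (1 - p) ^ (n - 1) + real n * real (n - 1) * p * (1 - p) ^ (n - 2)
      \<le> exp 1 * real n * ((1 + x) * exp (- x))"
    by (simp add: algebra_simps)
  also have "\<dots> \<le> exp 1 * real n * ((1 + L) * exp (- L))"
    using one_plus_mult_exp_neg_antimono[OF \<open>0 \<le> L\<close> \<open>L \<le> x\<close>] \<open>real n > 0\<close> by (intro mult_left_mono) auto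
  also have "exp (- L) = exp (- w) / (real n * ln (real n))"
    using \<open>real n > 0\<close> \<open>ln (real n) > 0\<close> unfolding L_def by (simp add: exp_diff exp_add exp_minus field_simps)
  also have "exp 1 * real n * ((1 + L) * (exp (- w) / (real n * ln (real n))))
      = exp 1 * exp (- w) * ((1 + L) / ln (real n))"
    using \<open>real n > 0\<close> \<open>ln (real n) > 0\<close> by (simp add: field_simps)
  also have "\<dots> \<le> exp 1 * exp (- w) * 4"
  proof -
    have "1 + L \<le> 4 * ln (real n)" unfolding L_def using n w by linarith
    then show ?thesis using \<open>ln (real n) > 0\<close> by (intro mult_left_mono) (auto simp: divide_simps)
  qed
  finally show ?thesis by simp
qed

lemma dom_witness_term_le:
  assumes k: "0 < k" "k \<le> 4" "k \<le> n" and p: "0 \<le> p" "p \<le> 1/2"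
  shows "real n ^ k * (p ^ k * (p ^ 2 + (1 - p)) ^ (n - k)) \<le> (4 * real k) ^ k * exp 1 * exp (- (real n * p) / 4)"
proof -
  define x where "x = real n * p"
  have "0 \<le> x" using p by (simp add: x_def)
  have "(p ^ 2 + (1 - p)) ^ (n - k) \<le> exp (- p * real (n - k) / 2)"
    by (rule sq_plus_one_minus_power_le_exp) (use p in auto)
  also have "\<dots> \<le> exp (1 + - x / 2)"
  proof -
    have "- p * real (n - k) / 2 = - x / 2 + p * real k / 2"
      using k by (simp add: x_def of_nat_diff field_simps)
    moreover have "p * real k \<le> 2" using k p mult_mono[of p "1/2" "real k" 4] by simp
    ultimately show ?thesis by simp
  qed
  also have "\<dots> = exp 1 * exp (- x / 2)" by (rule mult_exp_exp[symmetric])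
  finally have q: "(p ^ 2 + (1 - p)) ^ (n - k) \<le> exp 1 * exp (- x / 2)" .
  have "real n ^ k * (p ^ k * (p ^ 2 + (1 - p)) ^ (n - k)) = x ^ k * (p ^ 2 + (1 - p)) ^ (n - k)"
    by (simp add: x_def power_mult_distrib)
  also have "\<dots> \<le> ((4 * real k) ^ k * exp (x / 4)) * (exp 1 * exp (- x / 2))"
    using power_le_exp_quarter[OF \<open>0 \<le> x\<close> k(1)] q \<open>0 \<le> x\<close> sq_plus_one_minus_bounds[of p] p
    by (intro mult_mono) auto
  also have "\<dots> = (4 * real k) ^ k * exp 1 * (exp (x / 4) * exp (- x / 2))" by simp
  also have "exp (x / 4) * exp (- x / 2) = exp (- x / 4)" by (simp add: mult_exp_exp)
  finally show ?thesis by (simp add: x_def)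
qed

definition dom_failure_bound :: "nat \<Rightarrow> real \<Rightarrow> real" where
  "dom_failure_bound n w = 4 * exp 1 * exp (- w) + 67264 * exp 1 * exp (- ln (real n) / 4)"

lemma prob_dom_pairs_nonempty_le_exp:
  fixes n :: nat and p w :: real
  assumes n: "n \<ge> 5" "1 \<le> ln (real n)" and w: "0 \<le> w" "w \<le> ln (ln (real n))" "ln (ln (real n)) \<le> ln (real n)"
    and p: "0 \<le> p" "p \<le> 1/2" and x: "ln (real n) + ln (ln (real n)) + w \<le> real n * p"
  shows "measure_pmf.prob (Gnp n p) {G. dom_pairs n G \<noteq> {}} \<le> dom_failure_bound n w"
proof -
  have "real n ^ 3 * (p ^ 3 * (p ^ 2 + (1 - p)) ^ (n - 3)) + real n ^ 4 * (p ^ 4 * (p ^ 2 + (1 - p)) ^ (n - 4))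
      \<le> 1728 * exp 1 * exp (- (real n * p) / 4) + 65536 * exp 1 * exp (- (real n * p) / 4)"
    using dom_witness_term_le[of 3 n p] dom_witness_term_le[of 4 n p] n p by simp
  also have "\<dots> = 67264 * exp 1 * exp (- (real n * p) / 4)" by simp
  also have "\<dots> \<le> 67264 * exp 1 * exp (- ln (real n) / 4)"
    using x w by simp
  finally have "real n ^ 3 * (p ^ 3 * (p ^ 2 + (1 - p)) ^ (n - 3)) + real n ^ 4 * (p ^ 4 * (p ^ 2 + (1 - p)) ^ (n - 4))
      \<le> 67264 * exp 1 * exp (- ln (real n) / 4)" .
  then show ?thesis
    using prob_dom_pairs_nonempty_le[of p n] isolated_leaf_term_le[of n w p] n w p x
    unfolding dom_failure_bound_def by simp
qed

section \<open>Asymptotics\<close>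

lemma aas_if_prob_ge:
  assumes "\<forall>\<^sub>F n in sequentially. 1 - B n \<le> measure_pmf.prob (Gnp n (p n)) {G. Q n G}"
    and "B \<longlonglongrightarrow> 0"
  shows "aas p Q"
proof -
  have lower: "(\<lambda>n. 1 - B n) \<longlonglongrightarrow> 1" using tendsto_diff[OF tendsto_const assms(2), of 1] by simp
  have upper: "\<forall>\<^sub>F n in sequentially. measure_pmf.prob (Gnp n (p n)) {G. Q n G} \<le> 1"
    by (simp add: measure_pmf.prob_le_1)
  show ?thesis unfolding aas_def by (rule tendsto_sandwich[OF assms(1) upper lower tendsto_const])
qed

lemma eventually_ln_bounds:
  "\<forall>\<^sub>F n in sequentially. 4/3 \<le> ln (real n) \<and> 0 \<le> ln (ln (real n)) \<and> ln (ln (real n)) \<le> ln (real n) \<and>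
     2 * ln (real n) / real n \<le> 1/2 \<and> 8 * ln (real n) ^ 2 / real n \<le> 1 \<and>
     2 \<le> exp (ln (real n) / 4) / exp 1"
  by (intro eventually_conj) real_asymp+

lemma filterlim_min_at_top:
  "filterlim f at_top F \<Longrightarrow> filterlim g at_top F \<Longrightarrow> filterlim (\<lambda>x. min (f x) (g x) :: real) at_top F"
  unfolding filterlim_at_top by (auto intro: eventually_conj)

lemma filterlim_at_top_divide_const:
  assumes "filterlim f at_top F" "0 < (c :: real)"
  shows "filterlim (\<lambda>x. f x / c) at_top F"
  using filterlim_tendsto_pos_mult_at_top[OF tendsto_const[of "1 / c"] _ assms(1)] assms(2)
  by simp

lemma filterlim_min_ln_ln:
  "filterlim \<omega> at_top sequentially \<Longrightarrow> filterlim (\<lambda>n. min (\<omega> n) (ln (ln (real n)))) at_top sequentially"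
  by (rule filterlim_min_at_top) (assumption, real_asymp)

lemma exp_neg_tendsto_0: "filterlim (w :: 'a \<Rightarrow> real) at_top F \<Longrightarrow> ((\<lambda>x. exp (- w x)) \<longlongrightarrow> 0) F"
  by (simp add: filterlim_compose[OF exp_at_bot] filterlim_uminus_at_bot tendsto_imp_filterlim_at_right)

text \<open>Truncating \<open>\<omega>\<close> at \<open>ln (ln n)\<close> only weakens the hypothesis, and keeps the threshold
  \<open>ln n + ln (ln n) - w n\<close> between \<open>ln n\<close> and \<open>2 ln n\<close>.\<close>

lemma eventually_below_threshold:
  fixes p \<omega> :: "nat \<Rightarrow> real"
  assumes range: "\<And>n. 0 \<le> p n \<and> p n \<le> 1"
    and om: "filterlim \<omega> at_top sequentially"
    and below: "\<forall>\<^sub>F n in sequentially. p n < (ln n + ln (ln n) - \<omega> n) / n"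
  defines "w \<equiv> \<lambda>n. min (\<omega> n) (ln (ln (real n)))"
  shows "\<forall>\<^sub>F n in sequentially. 3 \<le> n \<and> 4/3 \<le> ln (real n) \<and> 0 \<le> w n \<and>
    real n * p n < ln (real n) + ln (ln (real n)) - w n \<and>
    ln (real n) \<le> ln (real n) + ln (ln (real n)) - w n \<and> ln (real n) + ln (ln (real n)) - w n \<le> 2 * ln (real n) \<and>
    p n \<le> 2 * ln (real n) / real n \<and> p n \<le> 1/2 \<and> 2 * p n ^ 2 * real n \<le> 1 \<and>
    2 \<le> exp (ln (real n) / 4) / exp 1"
  using eventually_ge_at_top[of 3] eventually_ln_bounds filterlim_at_top[THEN iffD1, OF om, rule_format, of 0] below
proof eventually_elim
  case (elim n)
  have "real n > 0" using elim by simp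
  have ln: "4/3 \<le> ln (real n)" "0 \<le> ln (ln (real n))" "ln (ln (real n)) \<le> ln (real n)"
    "2 * ln (real n) / real n \<le> 1/2" "8 * ln (real n) ^ 2 / real n \<le> 1" "2 \<le> exp (ln (real n) / 4) / exp 1"
    using elim(2) by blast+
  have w: "0 \<le> w n" "w n \<le> \<omega> n" "w n \<le> ln (ln (real n))" using elim by (auto simp: w_def)
  have "real n * p n < ln n + ln (ln n) - \<omega> n" using elim \<open>real n > 0\<close> by (simp add: divide_simps mult.commute)
  then have x: "real n * p n < ln (real n) + ln (ln (real n)) - w n" using w by linarith
  have "real n * p n \<le> 2 * ln (real n)" using x w ln by linarith
  then have "p n \<le> 2 * ln (real n) / real n"
    using \<open>real n > 0\<close> by (simp add: divide_simps mult.commute)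
  moreover have "2 * p n ^ 2 * real n \<le> 1"
  proof -
    have "p n ^ 2 \<le> (2 * ln (real n) / real n) ^ 2" using \<open>p n \<le> _\<close> range[of n] by (intro power_mono) auto
    then have "2 * p n ^ 2 * real n \<le> 2 * (2 * ln (real n) / real n) ^ 2 * real n"
      using \<open>real n > 0\<close> by (intro mult_right_mono) auto
    also have "\<dots> = 8 * ln (real n) ^ 2 / real n" using \<open>real n > 0\<close> by (simp add: power2_eq_square field_simps)
    finally show ?thesis using ln by linarith
  qed
  ultimately show ?case using elim(1) w x ln by (intro conjI) linarith+
qed

lemma nonadj_failure_bound_tendsto_0:
  "filterlim w at_top sequentially \<Longrightarrow> (\<lambda>n. nonadj_failure_bound n (w n)) \<longlonglongrightarrow> 0"
proof -
  assume w: "filterlim w at_top sequentially"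
  define T where "T n = 4 * exp 1 * exp (- ln (real n) / 4) + 24 * ln (real n) / real n
     + 64 / (3 * real (n - 1) * ln (real n)) + 64 * ln (real n) / real n
     + 2 * exp 2 * exp (- ln (real n) / 8)" for n :: nat
  have "T \<longlonglongrightarrow> 0" unfolding T_def by real_asymp
  from tendsto_add_zero[OF this tendsto_mult_right_zero[OF exp_neg_tendsto_0[OF w]]]
  have "(\<lambda>n. T n + 8 * exp 1 * exp (- w n)) \<longlonglongrightarrow> 0" .
  moreover have "nonadj_failure_bound n (w n) = T n + 8 * exp 1 * exp (- w n)" for n
    by (simp add: nonadj_failure_bound_def T_def algebra_simps)
  ultimately show ?thesis by simp
qed

lemma dom_failure_bound_tendsto_0:
  "filterlim w at_top sequentially \<Longrightarrow> (\<lambda>n. dom_failure_bound n (w n)) \<longlonglongrightarrow> 0"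
proof -
  assume w: "filterlim w at_top sequentially"
  have "(\<lambda>n. 67264 * exp 1 * exp (- ln (real n) / 4)) \<longlonglongrightarrow> 0" by real_asymp
  with tendsto_add_zero[OF tendsto_mult_right_zero[OF exp_neg_tendsto_0[OF w]] this, of "4 * exp 1"]
  show ?thesis by (simp add: dom_failure_bound_def)
qed

lemma aas_adj_dom_pairs_empty:
  assumes "\<And>n. 0 \<le> p n \<and> p n \<le> 1" and "(\<lambda>n. p n * real n ^ 2) \<longlonglongrightarrow> 0"
  shows "aas p (\<lambda>n G. adj_dom_pairs n G = {})"
proof (rule aas_if_prob_ge[OF _ assms(2)])
  show "\<forall>\<^sub>F n in sequentially. 1 - p n * real n ^ 2 \<le> measure_pmf.prob (Gnp n (p n)) {G. adj_dom_pairs n G = {}}"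
    using prob_adj_dom_pairs_empty_ge[of "p _"] assms(1) by (simp add: mult.commute)
qed

lemma aas_nonadj_dom_pairs_empty:
  assumes "\<And>n. 0 \<le> p n \<and> p n \<le> 1" and "(\<lambda>n. (1 - p n) * real n ^ 2) \<longlonglongrightarrow> 0"
  shows "aas p (\<lambda>n G. nonadj_dom_pairs n G = {})"
proof (rule aas_one_minus[OF assms(1)])
  show "aas (\<lambda>n. 1 - p n) (\<lambda>n G. adj_dom_pairs n G = {})"
    using assms by (intro aas_adj_dom_pairs_empty) auto
qed (simp add: nonadj_dom_pairs_compl_graph)

lemma aas_many_nonadj_dom_pairs_below:
  fixes p \<omega> :: "nat \<Rightarrow> real" and C :: real
  assumes range: "\<And>n. 0 \<le> p n \<and> p n \<le> 1" and C: "C > 0"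
    and om: "filterlim \<omega> at_top sequentially"
    and below: "\<forall>\<^sub>F n in sequentially. p n < (ln n + ln (ln n) - \<omega> n) / n"
  shows "aas p (\<lambda>n G. real (card (nonadj_dom_pairs n G)) \<ge> C)"
proof -
  define w where "w n = min (\<omega> n) (ln (ln (real n)))" for n
  have w: "filterlim w at_top sequentially" unfolding w_def by (rule filterlim_min_ln_ln[OF om])
  have "filterlim (\<lambda>n. exp (w n) / (2 * exp 1)) at_top sequentially"
    by (intro filterlim_at_top_divide_const filterlim_compose[OF exp_at_top w]) auto
  note large = filterlim_at_top[THEN iffD1, OF this, rule_format, of "2 * C"]
    filterlim_at_top[THEN iffD1, OF filterlim_real_sequentially, rule_format, of "C + 1"]
  show ?thesis
  proof (rule aas_if_prob_ge[OF _ nonadj_failure_bound_tendsto_0[OF w]])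
    show "\<forall>\<^sub>F n in sequentially. 1 - nonadj_failure_bound n (w n)
        \<le> measure_pmf.prob (Gnp n (p n)) {G. C \<le> real (card (nonadj_dom_pairs n G))}"
      using eventually_below_threshold[OF range om below] large unfolding w_def[symmetric]
    proof eventually_elim
      case (elim n)
      then show ?case using range[of n] C by (intro prob_many_nonadj_dom_pairs_ge) auto
    qed
  qed
qed

lemma filterlim_ordered_pairs_mean_at_top:
  assumes "\<And>n. 0 \<le> p n" and "filterlim (\<lambda>n. p n * real n ^ 2) at_top sequentially"
  shows "filterlim (\<lambda>n. real n * real (n - 1) * p n) at_top sequentially"
proof (rule filterlim_at_top_mono[OF filterlim_at_top_divide_const[OF assms(2), of 2]])
  show "\<forall>\<^sub>F n in sequentially. p n * real n ^ 2 / 2 \<le> real n * real (n - 1) * p n"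
    using eventually_ge_at_top[of 2]
  proof eventually_elim
    case (elim n)
    then have "real n * (real n / 2) * p n \<le> real n * real (n - 1) * p n"
      using assms(1)[of n] by (intro mult_right_mono mult_left_mono) auto
    then show ?case by (simp add: power2_eq_square algebra_simps)
  qed
qed simp

lemma tendsto_0_below_threshold:
  fixes p \<omega> :: "nat \<Rightarrow> real"
  assumes range: "\<And>n. 0 \<le> p n \<and> p n \<le> 1"
    and om: "filterlim \<omega> at_top sequentially"
    and below: "\<forall>\<^sub>F n in sequentially. p n < (ln n + ln (ln n) - \<omega> n) / n"
  shows "p \<longlonglongrightarrow> 0"
proof -
  have "\<forall>\<^sub>F n in sequentially. 0 \<le> p n" using range by simp
  moreover have "\<forall>\<^sub>F n in sequentially. p n \<le> 2 * ln (real n) / real n"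
    by (rule eventually_mono[OF eventually_below_threshold[OF range om below]]) (elim conjE, assumption)
  moreover have "(\<lambda>n. 2 * ln (real n) / real n) \<longlonglongrightarrow> 0" by real_asymp
  ultimately show ?thesis by (rule tendsto_sandwich[OF _ _ tendsto_const])
qed

lemma aas_many_adj_dom_pairs_below:
  fixes p \<omega> :: "nat \<Rightarrow> real" and C :: real
  assumes range: "\<And>n. 0 \<le> p n \<and> p n \<le> 1" and C: "C > 0"
    and om: "filterlim \<omega> at_top sequentially"
    and below: "\<forall>\<^sub>F n in sequentially. p n < (ln n + ln (ln n) - \<omega> n) / n"
    and dense: "filterlim (\<lambda>n. p n * real n ^ 2) at_top sequentially"
  shows "aas p (\<lambda>n G. real (card (adj_dom_pairs n G)) \<ge> C)"
proof -
  define w where "w n = min (\<omega> n) (ln (ln (real n)))" for n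
  define N where "N n = real n * real (n - 1) * p n" for n
  define m where "m n = min (N n / exp 2) (exp (w n) / (2 * exp 1))" for n
  have w: "filterlim w at_top sequentially" unfolding w_def by (rule filterlim_min_ln_ln[OF om])
  have N: "filterlim N at_top sequentially"
    unfolding N_def using range dense by (intro filterlim_ordered_pairs_mean_at_top) auto
  have "filterlim (\<lambda>n. N n / exp 2) at_top sequentially"
    using filterlim_at_top_divide_const[OF N] by simp
  moreover have "filterlim (\<lambda>n. exp (w n) / (2 * exp 1)) at_top sequentially"
    using filterlim_at_top_divide_const[OF filterlim_compose[OF exp_at_top w]] by simp
  ultimately have m: "filterlim m at_top sequentially"
    unfolding m_def by (rule filterlim_min_at_top)
  have bound: "(\<lambda>n. 4 / m n + 16 / N n + 32 * p n) \<longlonglongrightarrow> 0"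
    using tendsto_divide_0[OF tendsto_const filterlim_at_top_imp_at_infinity[OF m], of 4]
      tendsto_divide_0[OF tendsto_const filterlim_at_top_imp_at_infinity[OF N], of 16]
      tendsto_0_below_threshold[OF range om below]
    by (intro tendsto_add_zero tendsto_mult_right_zero)
  show ?thesis
  proof (rule aas_if_prob_ge[OF _ bound])
    show "\<forall>\<^sub>F n in sequentially. 1 - (4 / m n + 16 / N n + 32 * p n)
        \<le> measure_pmf.prob (Gnp n (p n)) {G. C \<le> real (card (adj_dom_pairs n G))}"
      using eventually_below_threshold[OF range om below] filterlim_at_top[THEN iffD1, OF m, rule_format, of "2 * C"]
      unfolding w_def[symmetric]
    proof eventually_elim
      case (elim n)
      have "m n > 0" using elim C by linarith
      then have "p n > 0" using range[of n] by (cases "p n = 0") (auto simp: m_def N_def)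
      moreover have "m n \<le> N n * (1 - p n) ^ (n - 2)"
        using leaf_mean_ge[of n "p n" "w n"] elim range[of n] by (simp add: m_def N_def)
      ultimately show ?case
        using elim C unfolding N_def by (intro prob_many_adj_dom_pairs_ge) (auto simp: mult.assoc)
    qed
  qed
qed

lemma prob_dom_pairs_empty_ge:
  fixes n :: nat and p w1 w2 :: real
  assumes n: "n \<ge> 5" "1 \<le> ln (real n)" "ln (ln (real n)) \<le> ln (real n)"
    and w: "0 \<le> w1" "w1 \<le> ln (ln (real n))" "0 \<le> w2" "w2 \<le> ln (ln (real n))"
    and p: "0 \<le> p" "p \<le> 1"
    and x: "ln (real n) + ln (ln (real n)) + w1 \<le> real n * p" "ln (real n) + ln (ln (real n)) + w2 \<le> real n * (1 - p)"
  shows "1 - (dom_failure_bound n w1 + dom_failure_bound n w2) \<le> measure_pmf.prob (Gnp n p) {G. dom_pairs n G = {}}"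
proof -
  have "0 \<le> dom_failure_bound n w1" "0 \<le> dom_failure_bound n w2"
    by (auto simp: dom_failure_bound_def)
  moreover have "1 - dom_failure_bound n w1 \<le> measure_pmf.prob (Gnp n p) {G. dom_pairs n G = {}}"
    if "p \<le> 1/2"
  proof -
    have "measure_pmf.prob (Gnp n p) {G. dom_pairs n G \<noteq> {}} \<le> dom_failure_bound n w1"
      using n w p x that by (intro prob_dom_pairs_nonempty_le_exp) auto
    then show ?thesis
      using measure_pmf_prob_ge_if_compl_subset[of "\<lambda>G. dom_pairs n G = {}" "{G. dom_pairs n G \<noteq> {}}" "Gnp n p"]
      by auto
  qed
  moreover have "1 - dom_failure_bound n w2 \<le> measure_pmf.prob (Gnp n p) {G. dom_pairs n G = {}}"
    if "\<not> p \<le> 1/2"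
  proof -
    have "measure_pmf.prob (Gnp n (1 - p)) {G. dom_pairs n G \<noteq> {}} \<le> dom_failure_bound n w2"
      using n w p x that by (intro prob_dom_pairs_nonempty_le_exp) auto
    then have "1 - dom_failure_bound n w2 \<le> measure_pmf.prob (Gnp n (1 - p)) {G. dom_pairs n G = {}}"
      using measure_pmf_prob_ge_if_compl_subset[of "\<lambda>G. dom_pairs n G = {}" "{G. dom_pairs n G \<noteq> {}}" "Gnp n (1 - p)"]
      by auto
    also have "\<dots> = measure_pmf.prob (Gnp n p) {G. dom_pairs n G = {}}"
      using prob_Gnp_compl_graph[of p n "\<lambda>G. dom_pairs n G = {}"] p
      by (simp add: dom_pairs_compl_graph_eq_empty)
    finally show ?thesis .
  qed
  ultimately show ?thesis by (cases "p \<le> 1/2") auto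
qed

lemma aas_dom_pairs_empty:
  fixes p \<omega>1 \<omega>2 :: "nat \<Rightarrow> real"
  assumes range: "\<And>n. 0 \<le> p n \<and> p n \<le> 1"
    and om1: "filterlim \<omega>1 at_top sequentially" and om2: "filterlim \<omega>2 at_top sequentially"
    and between: "\<forall>\<^sub>F n in sequentially. (ln n + ln (ln n) + \<omega>1 n) / n < p n \<and>
             p n < 1 - (ln n + ln (ln n) + \<omega>2 n) / n"
  shows "aas p (\<lambda>n G. dom_pairs n G = {})"
proof -
  define w1 where "w1 n = min (\<omega>1 n) (ln (ln (real n)))" for n
  define w2 where "w2 n = min (\<omega>2 n) (ln (ln (real n)))" for n
  have "filterlim w1 at_top sequentially" "filterlim w2 at_top sequentially"
    unfolding w1_def w2_def using om1 om2 by (auto intro: filterlim_min_ln_ln)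
  then have bound: "(\<lambda>n. dom_failure_bound n (w1 n) + dom_failure_bound n (w2 n)) \<longlonglongrightarrow> 0"
    by (intro tendsto_add_zero dom_failure_bound_tendsto_0)
  show ?thesis
  proof (rule aas_if_prob_ge[OF _ bound])
    show "\<forall>\<^sub>F n in sequentially. 1 - (dom_failure_bound n (w1 n) + dom_failure_bound n (w2 n))
        \<le> measure_pmf.prob (Gnp n (p n)) {G. dom_pairs n G = {}}"
      using eventually_ge_at_top[of 5] eventually_ln_bounds between
        filterlim_at_top[THEN iffD1, OF om1, rule_format, of 0] filterlim_at_top[THEN iffD1, OF om2, rule_format, of 0]
    proof eventually_elim
      case (elim n)
      have "real n > 0" using elim by simp
      have ln: "1 \<le> ln (real n)" "ln (ln (real n)) \<le> ln (real n)" using elim(2) by auto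
      have w: "0 \<le> w1 n" "w1 n \<le> ln (ln (real n))" "w1 n \<le> \<omega>1 n"
        "0 \<le> w2 n" "w2 n \<le> ln (ln (real n))" "w2 n \<le> \<omega>2 n"
        using elim by (auto simp: w1_def w2_def)
      have "ln (real n) + ln (ln (real n)) + w1 n \<le> real n * p n"
        "ln (real n) + ln (ln (real n)) + w2 n \<le> real n * (1 - p n)"
        using elim(3) w \<open>real n > 0\<close> by (simp_all add: divide_simps algebra_simps)
      then show ?case using elim(1) ln w range[of n] by (intro prob_dom_pairs_empty_ge) auto
    qed
  qed
qed

lemma aas_many_adj_dom_pairs_above:
  fixes p \<omega> :: "nat \<Rightarrow> real" and C :: real
  assumes range: "\<And>n. 0 \<le> p n \<and> p n \<le> 1" and C: "C > 0"
    and om: "filterlim \<omega> at_top sequentially"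
    and above: "\<forall>\<^sub>F n in sequentially. p n > 1 - (ln n + ln (ln n) - \<omega> n) / n"
  shows "aas p (\<lambda>n G. real (card (adj_dom_pairs n G)) \<ge> C)"
proof (rule aas_one_minus[OF range])
  show "aas (\<lambda>n. 1 - p n) (\<lambda>n G. real (card (nonadj_dom_pairs n G)) \<ge> C)"
  proof (rule aas_many_nonadj_dom_pairs_below[OF _ C om])
    show "\<forall>\<^sub>F n in sequentially. 1 - p n < (ln n + ln (ln n) - \<omega> n) / n"
      using above by eventually_elim linarith
  qed (use range in auto)
qed (simp add: adj_dom_pairs_compl_graph card_image)

lemma aas_many_nonadj_dom_pairs_above:
  fixes p \<omega> :: "nat \<Rightarrow> real" and C :: real
  assumes range: "\<And>n. 0 \<le> p n \<and> p n \<le> 1" and C: "C > 0"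
    and om: "filterlim \<omega> at_top sequentially"
    and above: "\<forall>\<^sub>F n in sequentially. p n > 1 - (ln n + ln (ln n) - \<omega> n) / n"
    and dense: "filterlim (\<lambda>n. (1 - p n) * real n ^ 2) at_top sequentially"
  shows "aas p (\<lambda>n G. real (card (nonadj_dom_pairs n G)) \<ge> C)"
proof (rule aas_one_minus[OF range])
  show "aas (\<lambda>n. 1 - p n) (\<lambda>n G. real (card (adj_dom_pairs n G)) \<ge> C)"
  proof (rule aas_many_adj_dom_pairs_below[OF _ C om])
    show "\<forall>\<^sub>F n in sequentially. 1 - p n < (ln n + ln (ln n) - \<omega> n) / n"
      using above by eventually_elim linarith
  qed (use range dense in auto)
qed (simp add: nonadj_dom_pairs_compl_graph card_image)

theorem theorem1p4:
  fixes C :: real and p :: "nat \<Rightarrow> real"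
  assumes "C > 0"
    and "\<And>n. 0 \<le> p n \<and> p n \<le> 1"
  shows
   "((\<lambda>n. p n * real n ^ 2) \<longlonglongrightarrow> 0 \<longrightarrow>
       aas p (\<lambda>n G. adj_dom_pairs n G = {}))
  \<and> ((\<exists>\<omega> :: nat \<Rightarrow> real. filterlim \<omega> at_top sequentially \<and>
         (\<forall>\<^sub>F n in sequentially. p n < (ln n + ln (ln n) - \<omega> n) / n)) \<longrightarrow>
       aas p (\<lambda>n G. real (card (nonadj_dom_pairs n G)) \<ge> C))
  \<and> ((\<exists>\<omega> :: nat \<Rightarrow> real. filterlim \<omega> at_top sequentially \<and>
         (\<forall>\<^sub>F n in sequentially. p n < (ln n + ln (ln n) - \<omega> n) / n))
       \<and> filterlim (\<lambda>n. p n * real n ^ 2) at_top sequentially \<longrightarrow>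
       aas p (\<lambda>n G. real (card (adj_dom_pairs n G)) \<ge> C))
  \<and> ((\<exists>\<omega>1 \<omega>2 :: nat \<Rightarrow> real. filterlim \<omega>1 at_top sequentially \<and>
         filterlim \<omega>2 at_top sequentially \<and>
         (\<forall>\<^sub>F n in sequentially. (ln n + ln (ln n) + \<omega>1 n) / n < p n \<and>
             p n < 1 - (ln n + ln (ln n) + \<omega>2 n) / n)) \<longrightarrow>
       aas p (\<lambda>n G. dom_pairs n G = {}))
  \<and> ((\<exists>\<omega> :: nat \<Rightarrow> real. filterlim \<omega> at_top sequentially \<and>
         (\<forall>\<^sub>F n in sequentially. p n > 1 - (ln n + ln (ln n) - \<omega> n) / n)) \<longrightarrow>
       aas p (\<lambda>n G. real (card (adj_dom_pairs n G)) \<ge> C))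
  \<and> ((\<exists>\<omega> :: nat \<Rightarrow> real. filterlim \<omega> at_top sequentially \<and>
         (\<forall>\<^sub>F n in sequentially. p n > 1 - (ln n + ln (ln n) - \<omega> n) / n))
       \<and> filterlim (\<lambda>n. (1 - p n) * real n ^ 2) at_top sequentially \<longrightarrow>
       aas p (\<lambda>n G. real (card (nonadj_dom_pairs n G)) \<ge> C))
  \<and> ((\<lambda>n. (1 - p n) * real n ^ 2) \<longlonglongrightarrow> 0 \<longrightarrow>
       aas p (\<lambda>n G. nonadj_dom_pairs n G = {}))"
  using aas_adj_dom_pairs_empty[of p, OF assms(2)]
    aas_many_nonadj_dom_pairs_below[of p C, OF assms(2,1)]
    aas_many_adj_dom_pairs_below[of p C, OF assms(2,1)]
    aas_dom_pairs_empty[of p, OF assms(2)]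
    aas_many_adj_dom_pairs_above[of p C, OF assms(2,1)]
    aas_many_nonadj_dom_pairs_above[of p C, OF assms(2,1)]
    aas_nonadj_dom_pairs_empty[of p, OF assms(2)]
  by blast

end
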